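(* Let $Y$ be a reflexive Banach space with dual $Y^*$. Assume: (i) $A\colon Y\to Y^*$ is pseudomonotone and $m$-strongly monotone for some $m>0$; (ii) $E\subset Y$ is nonempty, closed and convex; (iii) $\varphi\colon Y\to\mathbb{R}$ is convex and lower semicontinuous; (iv) $g\in Y^*$; (v) for each $n\in\mathbb{N}$, $E_n\subset Y$ is nonempty, closed and convex, and $E_n\to E$ in the sense of Mosco; (vi) $g_n\in Y^*$ and $g_n\to g$ in $Y^*$. Then for each $n$ there is a unique $u_n\in E_n$ with $$\langle Au_n-g_n,z-u_n\rangle+\varphi(z)-\varphi(u_n)\ge0\quad\text{for all } z\in E_n,$$ there is a unique $u\in E$ with $$\langle Au-g,z-u\rangle+\varphi(z)-\varphi(u)\ge0\quad\text{for all } z\in E,$$ and $u_n\to u$ strongly in $Y$ as $n\to\infty$.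
   Context: Pseudomonotone: $A$ is bounded (maps bounded sets to bounded sets) and, whenever $u_n\to u$ weakly in $Y$ and $\limsup_n\langle Au_n,u_n-u\rangle\le 0$, one has $\langle Au,u-v\rangle\le\liminf_n\langle Au_n,u_n-v\rangle$ for all $v\in Y$. $m$-strongly monotone: $\langle Av_1-Av_2,v_1-v_2\rangle\ge m\|v_1-v_2\|^2$ for all $v_1,v_2$. Mosco convergence: a sequence $\{C_n\}$ of closed convex subsets of a normed space $Y$ converges in the Mosco sense to a closed convex set $C\subset Y$ if (m1) whenever $n_k\to\infty$, $z_k\in C_{n_k}$ and $z_k\to z$ weakly in $Y$, then $z\in C$; and (m2) for every $z\in C$ there exist $z_n\in C_n$ with $z_n\to z$ strongly in $Y$. *)

theory Defs
  imports "HOL-Analysis.Analysis"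
begin

text \<open>The dual space of Y is modelled as the space of bounded linear functionals
  Y \<Rightarrow>L real (a Banach space with the operator norm); the duality pairing
  is function application.\<close>

definition reflexive_space :: "'a::real_normed_vector itself \<Rightarrow> bool" where
  "reflexive_space _ \<longleftrightarrow>
     (\<forall>\<Phi> :: ('a \<Rightarrow>\<^sub>L real) \<Rightarrow>\<^sub>L real. \<exists>y::'a. \<forall>f. blinfun_apply \<Phi> f = blinfun_apply f y)"

definition weakly_conv :: "(nat \<Rightarrow> 'a::real_normed_vector) \<Rightarrow> 'a \<Rightarrow> bool" where
  "weakly_conv x l \<longleftrightarrow> (\<forall>f :: 'a \<Rightarrow>\<^sub>L real. (\<lambda>n. blinfun_apply f (x n)) \<longlonglongrightarrow> blinfun_apply f l)"

definition bounded_operator :: "('a::real_normed_vector \<Rightarrow> 'b::real_normed_vector) \<Rightarrow> bool" where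
  "bounded_operator A \<longleftrightarrow> (\<forall>S. bounded S \<longrightarrow> bounded (A ` S))"

definition pseudomonotone :: "('a::real_normed_vector \<Rightarrow> ('a \<Rightarrow>\<^sub>L real)) \<Rightarrow> bool" where
  "pseudomonotone A \<longleftrightarrow> bounded_operator A \<and>
     (\<forall>un u. weakly_conv un u \<and>
        limsup (\<lambda>n. ereal (blinfun_apply (A (un n)) (un n - u))) \<le> 0 \<longrightarrow>
        (\<forall>v. ereal (blinfun_apply (A u) (u - v)) \<le> liminf (\<lambda>n. ereal (blinfun_apply (A (un n)) (un n - v)))))"

definition strongly_monotone :: "real \<Rightarrow> ('a::real_normed_vector \<Rightarrow> ('a \<Rightarrow>\<^sub>L real)) \<Rightarrow> bool" where
  "strongly_monotone m A \<longleftrightarrow>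
     (\<forall>v1 v2. blinfun_apply (A v1 - A v2) (v1 - v2) \<ge> m * (norm (v1 - v2))\<^sup>2)"

definition lower_semicont :: "('a::topological_space \<Rightarrow> real) \<Rightarrow> bool" where
  "lower_semicont f \<longleftrightarrow> (\<forall>x. \<forall>e>0. \<forall>\<^sub>F y in at x. f x - e < f y)"

definition mosco_conv :: "(nat \<Rightarrow> 'a::real_normed_vector set) \<Rightarrow> 'a set \<Rightarrow> bool" where
  "mosco_conv Cn C \<longleftrightarrow>
     (\<forall>nk z zl. filterlim nk at_top sequentially \<and> (\<forall>k. z k \<in> Cn (nk k)) \<and> weakly_conv z zl
        \<longrightarrow> zl \<in> C) \<and>
     (\<forall>z\<in>C. \<exists>zn. (\<forall>n. zn n \<in> Cn n) \<and> zn \<longlonglongrightarrow> z)"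

definition solves_VI :: "('a::real_normed_vector \<Rightarrow> ('a \<Rightarrow>\<^sub>L real)) \<Rightarrow> ('a \<Rightarrow>\<^sub>L real)
    \<Rightarrow> ('a \<Rightarrow> real) \<Rightarrow> 'a set \<Rightarrow> 'a \<Rightarrow> bool" where
  "solves_VI A g \<phi> C u \<longleftrightarrow> u \<in> C \<and>
     (\<forall>z\<in>C. blinfun_apply (A u - g) (z - u) + \<phi> z - \<phi> u \<ge> 0)"

end

theory Submission
  imports Defs "HOL-Library.Function_Algebras" "HOL-Library.Diagonal_Subsequence"
begin

text \<open>Existence: the gap \<open>h(z, u) = \<langle>A z - g, z - u\<rangle> + \<phi> z - \<phi> u - m \<parallel>z - u\<parallel>\<^sup>2\<close> is concave
  in \<open>u\<close>, and strong monotonicity makes its average over finitely many test points \<open>z\<close>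
  nonnegative at their barycentre. A Hahn--Banach minimax argument therefore gives, for finitely
  many \<open>z\<close>, a common point with \<open>h(z, u) \<ge> 0\<close>; the closed convex sets \<open>{u. h(z, u) \<ge> 0}\<close> lie
  in a fixed ball, so by reflexivity (a Tychonoff argument in the bidual) all of them meet, and
  a common point solves the inequality by Minty's lemma. Uniqueness is strong monotonicity.

  Convergence: the solutions \<open>u\<^sub>n\<close> are bounded; a weakly convergent subsequence has its limit
  \<open>w\<close> in \<open>E\<close> by (m1), and testing the inequalities with recovery sequences from (m2) verifies
  the hypothesis of pseudomonotonicity, so \<open>w\<close> solves the limit problem and equals \<open>u\<close>; strong
  monotonicity then turns weak into strong convergence. Throughout, the convex lower
  semicontinuous \<open>\<phi>\<close> is continuous (Baire) and weakly lower semicontinuous (Mazur).\<close>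

section \<open>The Hahn--Banach theorem\<close>

definition sublinear :: "('v::real_vector \<Rightarrow> real) \<Rightarrow> bool" where
  "sublinear p \<longleftrightarrow> (\<forall>x y. p (x + y) \<le> p x + p y) \<and> (\<forall>r x. r \<ge> 0 \<longrightarrow> p (r *\<^sub>R x) = r * p x)"

lemma sublinear_zero: "sublinear p \<Longrightarrow> p 0 = 0"
  unfolding sublinear_def by (metis mult_zero_left order_refl scaleR_zero_left)

lemma sublinearI:
  assumes add: "\<And>x y. p (x + y) \<le> p x + p y"
    and scale: "\<And>s x. s > 0 \<Longrightarrow> p (s *\<^sub>R x) \<le> s * p x"
    and zero: "p 0 = 0"
  shows "sublinear p"
  unfolding sublinear_def
proof (intro conjI allI impI add)
  fix r :: real and x assume "r \<ge> 0"
  show "p (r *\<^sub>R x) = r * p x"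
  proof (cases "r = 0")
    case True
    then show ?thesis using zero by simp
  next
    case False
    with \<open>r \<ge> 0\<close> have r: "r > 0" by simp
    have "p x = p (inverse r *\<^sub>R (r *\<^sub>R x))" using r by simp
    also have "\<dots> \<le> inverse r * p (r *\<^sub>R x)" using r by (intro scale) simp
    finally have "r * p x \<le> p (r *\<^sub>R x)" using r by (simp add: field_simps)
    with scale[OF r, of x] show ?thesis by simp
  qed
qed

text \<open>Linear functionals on subspaces are handled through their graphs, so that Zorn's lemma
  applies to the inclusion order.\<close>

definition dominated_linear_graph :: "('v::real_vector \<Rightarrow> real) \<Rightarrow> ('v \<times> real) set \<Rightarrow> bool" where
  "dominated_linear_graph p G \<longleftrightarrow> (\<forall>x y y'. (x,y)\<in>G \<longrightarrow> (x,y')\<in>G \<longrightarrow> y = y') \<and> (0,0) \<in> G \<and>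
     (\<forall>x y x' y'. (x,y)\<in>G \<longrightarrow> (x',y')\<in>G \<longrightarrow> (x+x', y+y')\<in>G) \<and>
     (\<forall>x y r. (x,y)\<in>G \<longrightarrow> (r *\<^sub>R x, r*y) \<in> G) \<and> (\<forall>x y. (x,y)\<in>G \<longrightarrow> y \<le> p x)"

lemma dominated_linear_graph_Union_chain:
  assumes "C \<in> chains {G. dominated_linear_graph p G \<and> G0 \<subseteq> G}" "C \<noteq> {}"
  shows "dominated_linear_graph p (\<Union>C)"
proof -
  have lg: "\<And>G. G \<in> C \<Longrightarrow> dominated_linear_graph p G"
    using assms unfolding chains_def by auto
  have two: "\<exists>G\<in>C. a \<in> G \<and> b \<in> G" if "a \<in> \<Union>C" "b \<in> \<Union>C" for a b
    using that assms(1) unfolding chains_def chain_subset_def by blast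
  show ?thesis
    unfolding dominated_linear_graph_def
  proof (intro conjI allI impI)
    show "(0,0) \<in> \<Union>C" using assms(2) lg unfolding dominated_linear_graph_def by blast
  next
    fix x y y' assume "(x,y) \<in> \<Union>C" "(x,y') \<in> \<Union>C"
    with two obtain G where "G \<in> C" "(x,y) \<in> G" "(x,y') \<in> G" by blast
    then show "y = y'" using lg unfolding dominated_linear_graph_def by blast
  next
    fix x y x' y' assume "(x,y) \<in> \<Union>C" "(x',y') \<in> \<Union>C"
    with two obtain G where "G \<in> C" "(x,y) \<in> G" "(x',y') \<in> G" by blast
    then show "(x+x', y+y') \<in> \<Union>C" using lg unfolding dominated_linear_graph_def by blast
  next
    fix x y r assume "(x,y) \<in> \<Union>C"
    then obtain G where "G \<in> C" "(x,y) \<in> G" by blast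
    then show "(r *\<^sub>R x, r*y) \<in> \<Union>C" using lg unfolding dominated_linear_graph_def by blast
  next
    fix x y assume "(x,y) \<in> \<Union>C"
    then obtain G where "G \<in> C" "(x,y) \<in> G" by blast
    then show "y \<le> p x" using lg unfolding dominated_linear_graph_def by blast
  qed
qed

text \<open>The one-step extension: the value \<open>c\<close> at the new direction \<open>x0\<close> is squeezed between
  the two bounds that domination by \<open>p\<close> imposes.\<close>

lemma dominated_linear_graph_extend:
  assumes p: "sublinear p" and M: "dominated_linear_graph p M" and x0: "x0 \<notin> fst ` M"
  shows "\<exists>G. dominated_linear_graph p G \<and> M \<subset> G"
proof -
  have fnl: "\<And>x y y'. (x,y)\<in>M \<Longrightarrow> (x,y')\<in>M \<Longrightarrow> y = y'" and z: "(0,0)\<in>M"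
    and add: "\<And>x y x' y'. (x,y)\<in>M \<Longrightarrow> (x',y')\<in>M \<Longrightarrow> (x+x', y+y')\<in>M"
    and sc: "\<And>x y r. (x,y)\<in>M \<Longrightarrow> (r *\<^sub>R x, r*y) \<in> M"
    and dom: "\<And>x y. (x,y)\<in>M \<Longrightarrow> y \<le> p x"
    using M unfolding dominated_linear_graph_def by blast+
  have padd: "\<And>x y. p (x+y) \<le> p x + p y" and phom: "\<And>r x. r \<ge> 0 \<Longrightarrow> p (r *\<^sub>R x) = r * p x"
    using p unfolding sublinear_def by auto
  define L where "L = {y - p (x - x0) | x y. (x,y) \<in> M}"
  have bd: "l \<le> p (x' + x0) - y'" if "l \<in> L" "(x',y') \<in> M" for l x' y'
  proof -
    obtain x y where l: "l = y - p (x - x0)" "(x,y) \<in> M" using \<open>l \<in> L\<close> unfolding L_def by blast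
    have "y + y' \<le> p (x + x')" using add l(2) that(2) dom by blast
    also have "\<dots> = p ((x - x0) + (x' + x0))" by (simp add: algebra_simps)
    also have "\<dots> \<le> p (x - x0) + p (x' + x0)" by (rule padd)
    finally show ?thesis using l by simp
  qed
  define c where "c = Sup L"
  have L_ne: "L \<noteq> {}" using z unfolding L_def by blast
  have L_bdd: "bdd_above L" using bd z unfolding bdd_above_def by blast
  have c_upper: "c \<le> p (x' + x0) - y'" if "(x',y') \<in> M" for x' y'
    unfolding c_def using L_ne bd that by (intro cSup_least) auto
  have c_lower: "y - p (x - x0) \<le> c" if "(x,y) \<in> M" for x y
    unfolding c_def using L_bdd that by (intro cSup_upper) (auto simp: L_def)
  define G where "G = {(x + a *\<^sub>R x0, y + a * c) | x y a. (x,y) \<in> M}"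
  have x0_indep: "a = 0" if "(x, y) \<in> M" "a *\<^sub>R x0 = x" for a x y
  proof (rule ccontr)
    assume "a \<noteq> 0"
    then have "((1/a) *\<^sub>R x, (1/a) * y) \<in> M" using sc that(1) by blast
    moreover have "(1/a) *\<^sub>R x = x0" using that(2) \<open>a \<noteq> 0\<close> by auto
    ultimately show False using x0 by force
  qed
  have "dominated_linear_graph p G"
    unfolding dominated_linear_graph_def
  proof (intro conjI allI impI)
    fix x y y' assume "(x,y) \<in> G" "(x,y') \<in> G"
    then obtain x1 y1 a1 x2 y2 a2 where e: "(x1,y1)\<in>M" "(x2,y2)\<in>M" "x = x1 + a1 *\<^sub>R x0"
      "x = x2 + a2 *\<^sub>R x0" "y = y1 + a1 * c" "y' = y2 + a2 * c" unfolding G_def by blast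
    have "(x1 + (-1) *\<^sub>R x2, y1 + (-1) * y2) \<in> M" using add sc e by blast
    moreover have "(a2 - a1) *\<^sub>R x0 = x1 + (-1) *\<^sub>R x2" using e(3,4) by (simp add: algebra_simps)
    ultimately have "a2 - a1 = 0" using x0_indep by blast
    then have "a1 = a2" "x1 = x2" using e by auto
    then show "y = y'" using e fnl by auto
  next
    show "(0,0) \<in> G" unfolding G_def using z by force
  next
    fix x y x' y' assume "(x,y) \<in> G" "(x',y') \<in> G"
    then obtain x1 y1 a1 x2 y2 a2 where e: "(x1,y1)\<in>M" "(x2,y2)\<in>M" "x = x1 + a1 *\<^sub>R x0"
      "x' = x2 + a2 *\<^sub>R x0" "y = y1 + a1 * c" "y' = y2 + a2 * c" unfolding G_def by blast
    have "(x1 + x2, y1 + y2) \<in> M" using add e by blast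
    moreover have "x + x' = (x1 + x2) + (a1 + a2) *\<^sub>R x0" "y + y' = (y1 + y2) + (a1 + a2) * c"
      using e by (simp_all add: algebra_simps)
    ultimately show "(x+x', y+y') \<in> G" unfolding G_def by blast
  next
    fix x y r assume "(x,y) \<in> G"
    then obtain x1 y1 a1 where e: "(x1,y1)\<in>M" "x = x1 + a1 *\<^sub>R x0" "y = y1 + a1 * c"
      unfolding G_def by blast
    have "(r *\<^sub>R x1, r * y1) \<in> M" using sc e by blast
    moreover have "r *\<^sub>R x = r *\<^sub>R x1 + (r * a1) *\<^sub>R x0" "r * y = r * y1 + (r * a1) * c"
      using e by (simp_all add: algebra_simps)
    ultimately show "(r *\<^sub>R x, r*y) \<in> G" unfolding G_def by blast
  next
    fix x y assume "(x,y) \<in> G"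
    then obtain x1 y1 a where e: "(x1,y1)\<in>M" "x = x1 + a *\<^sub>R x0" "y = y1 + a * c"
      unfolding G_def by blast
    consider "a > 0" | "a = 0" | "a < 0" by linarith
    then show "y \<le> p x"
    proof cases
      case 1
      define w where "w = (1/a) *\<^sub>R x1 + x0"
      have "((1/a) *\<^sub>R x1, (1/a) * y1) \<in> M" using sc e by blast
      from c_upper[OF this] have "a * c \<le> a * (p w - (1/a) * y1)"
        using 1 unfolding w_def by (simp add: mult_left_mono)
      also have "\<dots> = a * p w - y1"
        using 1 by (simp add: right_diff_distrib)
      also have "a * p w = p (a *\<^sub>R w)" using phom[of a w] 1 by simp
      also have "a *\<^sub>R w = x" using 1 e unfolding w_def by (simp add: algebra_simps)
      finally show ?thesis using e by simp
    next
      case 2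
      then show ?thesis using e dom by simp
    next
      case 3
      define b where "b = - a"
      have b: "b > 0" using 3 b_def by simp
      define w where "w = (1/b) *\<^sub>R x1 - x0"
      have "((1/b) *\<^sub>R x1, (1/b) * y1) \<in> M" using sc e by blast
      from c_lower[OF this] have "b * ((1/b) * y1 - p w) \<le> b * c"
        using b unfolding w_def by (simp add: mult_left_mono)
      moreover have "b * ((1/b) * y1 - p w) = y1 - b * p w"
        using b by (simp add: right_diff_distrib)
      moreover have "b * p w = p (b *\<^sub>R w)" using phom[of b w] b by simp
      moreover have "b *\<^sub>R w = x" using b e b_def unfolding w_def by (simp add: algebra_simps)
      ultimately show ?thesis using e b_def by (simp add: algebra_simps)
    qed
  qed
  moreover have "M \<subseteq> G"
  proof
    fix q assume "q \<in> M"
    then show "q \<in> G" unfolding G_def by (cases q) force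
  qed
  moreover have "(x0, c) \<in> G" unfolding G_def using z by force
  then have "G \<noteq> M" using x0 by force
  ultimately show ?thesis by blast
qed

lemma dominated_linear_graph_total_imp_functional:
  assumes M: "dominated_linear_graph p M" and total: "fst ` M = UNIV"
  shows "\<exists>F. linear F \<and> (\<forall>x. F x \<le> p x) \<and> (\<forall>x y. (x,y) \<in> M \<longrightarrow> F x = y)"
proof -
  have fnl: "\<And>x y y'. (x,y)\<in>M \<Longrightarrow> (x,y')\<in>M \<Longrightarrow> y = y'"
    and add: "\<And>x y x' y'. (x,y)\<in>M \<Longrightarrow> (x',y')\<in>M \<Longrightarrow> (x+x', y+y')\<in>M"
    and sc: "\<And>x y r. (x,y)\<in>M \<Longrightarrow> (r *\<^sub>R x, r*y) \<in> M"
    and dom: "\<And>x y. (x,y)\<in>M \<Longrightarrow> y \<le> p x"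
    using M unfolding dominated_linear_graph_def by blast+
  define F where "F x = (THE y. (x,y) \<in> M)" for x
  have FM: "(x, F x) \<in> M" for x
  proof -
    have "x \<in> fst ` M" using total by simp
    then obtain y where "(x,y) \<in> M" by force
    then have "\<exists>!y. (x,y) \<in> M" using fnl by blast
    then show ?thesis unfolding F_def by (rule theI')
  qed
  have Feq: "F x = y" if "(x,y) \<in> M" for x y using fnl[OF FM that] .
  have "linear F"
  proof (rule linearI)
    show "F (x + y) = F x + F y" for x y using Feq[OF add[OF FM FM]] .
    show "F (r *\<^sub>R x) = r *\<^sub>R F x" for r x using Feq[OF sc[OF FM]] by simp
  qed
  then show ?thesis using dom[OF FM] Feq by blast
qed

theorem hahn_banach_line:
  fixes p :: "'v::real_vector \<Rightarrow> real"
  assumes p: "sublinear p" and line: "\<And>a. a * c \<le> p (a *\<^sub>R e)"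
  shows "\<exists>F. linear F \<and> F e = c \<and> (\<forall>x. F x \<le> p x)"
proof -
  define G0 where "G0 = {(a *\<^sub>R e, a * c) | a. True}"
  have c_zero: "c = 0" if "e = 0"
    using line[of 1] line[of "-1"] sublinear_zero[OF p] that by simp
  have G0_iff: "(x, y) \<in> G0 \<longleftrightarrow> (\<exists>a. x = a *\<^sub>R e \<and> y = a * c)" for x y
    unfolding G0_def by blast
  have G0: "dominated_linear_graph p G0"
    unfolding dominated_linear_graph_def G0_iff
  proof (intro conjI allI impI)
    fix x y y' assume "\<exists>a. x = a *\<^sub>R e \<and> y = a * c" "\<exists>a. x = a *\<^sub>R e \<and> y' = a * c"
    then obtain a a' where e: "x = a *\<^sub>R e" "y = a * c" "x = a' *\<^sub>R e" "y' = a' * c" by blast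
    show "y = y'"
    proof (cases "e = 0")
      case True
      then show ?thesis using e c_zero by simp
    next
      case False
      then have "a = a'" using e by (metis scaleR_cancel_right)
      then show ?thesis using e by simp
    qed
  next
    show "\<exists>a. 0 = a *\<^sub>R e \<and> 0 = a * c" by (intro exI[of _ 0]) simp
  next
    fix x y x' y' assume "\<exists>a. x = a *\<^sub>R e \<and> y = a * c" "\<exists>a. x' = a *\<^sub>R e \<and> y' = a * c"
    then obtain a a' where "x = a *\<^sub>R e" "y = a * c" "x' = a' *\<^sub>R e" "y' = a' * c" by blast
    then show "\<exists>b. x + x' = b *\<^sub>R e \<and> y + y' = b * c"
      by (intro exI[of _ "a + a'"]) (simp add: algebra_simps)
  next
    fix x y r assume "\<exists>a. x = a *\<^sub>R e \<and> y = a * c"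
    then obtain a where "x = a *\<^sub>R e" "y = a * c" by blast
    then show "\<exists>b. r *\<^sub>R x = b *\<^sub>R e \<and> r * y = b * c" by (intro exI[of _ "r * a"]) simp
  next
    fix x y assume "\<exists>a. x = a *\<^sub>R e \<and> y = a * c"
    then obtain a where "x = a *\<^sub>R e" "y = a * c" by blast
    then show "y \<le> p x" using line[of a] by simp
  qed
  define \<A> where "\<A> = {G. dominated_linear_graph p G \<and> G0 \<subseteq> G}"
  have "\<forall>C\<in>chains \<A>. \<exists>U\<in>\<A>. \<forall>X\<in>C. X \<subseteq> U"
  proof
    fix C assume C: "C \<in> chains \<A>"
    show "\<exists>U\<in>\<A>. \<forall>X\<in>C. X \<subseteq> U"
    proof (cases "C = {}")
      case True
      then show ?thesis using G0 unfolding \<A>_def by auto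
    next
      case False
      have "dominated_linear_graph p (\<Union>C)"
        using dominated_linear_graph_Union_chain C False unfolding \<A>_def by blast
      moreover have "G0 \<subseteq> \<Union>C" using C False unfolding \<A>_def chains_def by blast
      ultimately show ?thesis unfolding \<A>_def by blast
    qed
  qed
  from Zorn_Lemma2[OF this] obtain M where M: "M \<in> \<A>" and max: "\<And>X. X \<in> \<A> \<Longrightarrow> M \<subseteq> X \<Longrightarrow> X = M"
    by blast
  from M have M': "dominated_linear_graph p M" "G0 \<subseteq> M" unfolding \<A>_def by auto
  have total: "fst ` M = UNIV"
  proof (rule ccontr)
    assume "fst ` M \<noteq> UNIV"
    then obtain x where "x \<notin> fst ` M" by blast
    then obtain G where G: "dominated_linear_graph p G" "M \<subset> G"
      using dominated_linear_graph_extend[OF p M'(1)] by blast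
    then have "G \<in> \<A>" using M'(2) unfolding \<A>_def by auto
    with max G(2) show False by blast
  qed
  from M'(1) dominated_linear_graph_total_imp_functional[OF _ total]
  obtain F where F: "linear F" "\<And>x. F x \<le> p x" "\<And>x y. (x,y) \<in> M \<Longrightarrow> F x = y"
    by blast
  have "(e, c) \<in> G0" unfolding G0_iff by (intro exI[of _ 1]) simp
  with \<open>G0 \<subseteq> M\<close> have "F e = c" using F(3) by blast
  then show ?thesis using F(1,2) by blast
qed

section \<open>Separation by bounded linear functionals\<close>

lemma abs_blinfun_apply_le: "\<bar>blinfun_apply (f :: 'a::real_normed_vector \<Rightarrow>\<^sub>L real) y\<bar> \<le> norm f * norm y"
  using norm_blinfun[of f y] by simp

lemma linear_bounded_above_imp_blinfun:
  fixes F :: "'a::real_normed_vector \<Rightarrow> real"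
  assumes "linear F" "K \<ge> 0" "\<And>x. F x \<le> K * norm x"
  shows "\<exists>f::'a \<Rightarrow>\<^sub>L real. blinfun_apply f = F \<and> norm f \<le> K"
proof -
  have abs_le: "\<bar>F x\<bar> \<le> K * norm x" for x
    using assms(3)[of x] assms(3)[of "-x"] linear_neg[OF assms(1), of x] by simp
  have "bounded_linear F"
  proof (rule bounded_linear_intro[where K=K])
    show "F (x + y) = F x + F y" for x y using linear_add[OF assms(1)] .
    show "F (r *\<^sub>R x) = r *\<^sub>R F x" for r x using linear_scale[OF assms(1)] .
    show "norm (F x) \<le> norm x * K" for x using abs_le[of x] by (simp add: mult.commute)
  qed
  then show ?thesis
    by (intro exI[of _ "Blinfun F"])
       (simp add: bounded_linear_Blinfun_apply norm_blinfun_bound[OF assms(2)] abs_le)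
qed

lemma norming_functional:
  fixes x :: "'a::real_normed_vector"
  shows "\<exists>f::'a \<Rightarrow>\<^sub>L real. norm f \<le> 1 \<and> blinfun_apply f x = norm x"
proof -
  have "sublinear (norm :: 'a \<Rightarrow> real)"
    unfolding sublinear_def by (auto simp: norm_triangle_ineq)
  moreover have "a * norm x \<le> norm (a *\<^sub>R x)" for a
    by (simp add: abs_ge_self mult_right_mono)
  ultimately obtain F where F: "linear F" "F x = norm x" "\<And>y. F y \<le> norm y"
    using hahn_banach_line by blast
  with linear_bounded_above_imp_blinfun[OF F(1), of 1] show ?thesis by auto
qed

lemma le_INF_add_INF:
  fixes f g :: "'i \<Rightarrow> real"
  assumes "A \<noteq> {}" "B \<noteq> {}" "\<And>a b. a \<in> A \<Longrightarrow> b \<in> B \<Longrightarrow> c \<le> f a + g b"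
  shows "c \<le> (INF a\<in>A. f a) + (INF b\<in>B. g b)"
proof -
  have "c - (INF b\<in>B. g b) \<le> f a" if "a \<in> A" for a
  proof -
    have "c - f a \<le> (INF b\<in>B. g b)"
      using assms(2,3) that by (intro cINF_greatest) (auto simp: algebra_simps)
    then show ?thesis by simp
  qed
  then have "c - (INF b\<in>B. g b) \<le> (INF a\<in>A. f a)"
    using assms(1) by (intro cINF_greatest) auto
  then show ?thesis by simp
qed

text \<open>For \<open>x0\<close> at distance at least \<open>r\<close> from the convex set \<open>C\<close> the gauge below is sublinear,
  bounded by \<open>norm y / r\<close>, at most \<open>1\<close> on \<open>C - c0\<close> and at least \<open>1\<close> at \<open>x0 - c0\<close>;
  Hahn--Banach then yields the separating functional.\<close>

definition separation_gauge :: "'a::real_normed_vector set \<Rightarrow> 'a \<Rightarrow> real \<Rightarrow> 'a \<Rightarrow> real" where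
  "separation_gauge C c0 r y = (INF (c, t) \<in> C \<times> {0..}. t + norm (y - t *\<^sub>R (c - c0)) / r)"

context
  fixes C :: "'a::real_normed_vector set" and c0 :: 'a and r :: real
  assumes convex: "convex C" and c0: "c0 \<in> C" and r: "r > 0"
begin

private abbreviation q where "q \<equiv> separation_gauge C c0 r"

lemma separation_gauge_le:
  assumes "c \<in> C" "t \<ge> 0"
  shows "q y \<le> t + norm (y - t *\<^sub>R (c - c0)) / r"
  unfolding separation_gauge_def
  by (rule cINF_lower2[where x="(c, t)"]) (use assms r in \<open>auto intro!: bdd_belowI2[of _ 0]\<close>)

lemma separation_gauge_greatest:
  assumes "\<And>c t. c \<in> C \<Longrightarrow> t \<ge> 0 \<Longrightarrow> b \<le> t + norm (y - t *\<^sub>R (c - c0)) / r"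
  shows "b \<le> q y"
  unfolding separation_gauge_def using c0 assms by (intro cINF_greatest) auto

lemma separation_gauge_sublinear: "sublinear q"
proof (rule sublinearI)
  fix y y'
  have "q (y + y') \<le> (t + norm (y - t *\<^sub>R (c - c0)) / r) + (t' + norm (y' - t' *\<^sub>R (c' - c0)) / r)"
    if "c \<in> C" "t \<ge> 0" "c' \<in> C" "t' \<ge> 0" for c t c' t'
  proof (cases "t + t' = 0")
    case True
    then have "t = 0" "t' = 0" using that by auto
    moreover have "norm (y + y') / r \<le> (norm y + norm y') / r"
      using r by (intro divide_right_mono norm_triangle_ineq) auto
    ultimately show ?thesis using separation_gauge_le[OF c0, of 0 "y + y'"]
      by (simp add: add_divide_distrib)
  next
    case False
    then have tt: "t + t' > 0" using that by auto
    define c'' where "c'' = (t / (t + t')) *\<^sub>R c + (t' / (t + t')) *\<^sub>R c'"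
    have "c'' \<in> C" unfolding c''_def
      by (rule convexD[OF convex that(1,3)]) (use that tt in \<open>auto simp: add_divide_distrib[symmetric]\<close>)
    have "(t + t') *\<^sub>R c'' = t *\<^sub>R c + t' *\<^sub>R c'"
      using tt by (simp add: c''_def scaleR_add_right)
    then have eq: "y + y' - (t + t') *\<^sub>R (c'' - c0) = (y - t *\<^sub>R (c - c0)) + (y' - t' *\<^sub>R (c' - c0))"
      by (simp add: algebra_simps)
    have "q (y + y') \<le> (t + t') + norm ((y - t *\<^sub>R (c - c0)) + (y' - t' *\<^sub>R (c' - c0))) / r"
      using separation_gauge_le[OF \<open>c'' \<in> C\<close>, of "t + t'" "y + y'"] tt unfolding eq by simp
    also have "\<dots> \<le> (t + t') + (norm (y - t *\<^sub>R (c - c0)) + norm (y' - t' *\<^sub>R (c' - c0))) / r"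
      using r by (intro add_left_mono divide_right_mono norm_triangle_ineq) auto
    finally show ?thesis by (simp add: add_divide_distrib)
  qed
  then show "q (y + y') \<le> q y + q y'"
    unfolding separation_gauge_def using c0 by (intro le_INF_add_INF) auto
next
  fix s :: real and y assume s: "s > 0"
  have "q (s *\<^sub>R y) / s \<le> q y"
  proof (rule separation_gauge_greatest)
    fix c and t :: real assume ct: "c \<in> C" "t \<ge> 0"
    have "q (s *\<^sub>R y) \<le> s * t + norm (s *\<^sub>R y - (s * t) *\<^sub>R (c - c0)) / r"
      using separation_gauge_le[OF ct(1), of "s * t" "s *\<^sub>R y"] ct s by simp
    also have "norm (s *\<^sub>R y - (s * t) *\<^sub>R (c - c0)) = s * norm (y - t *\<^sub>R (c - c0))"
    proof -
      have "s *\<^sub>R y - (s * t) *\<^sub>R (c - c0) = s *\<^sub>R (y - t *\<^sub>R (c - c0))"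
        by (simp add: algebra_simps)
      then show ?thesis using s by simp
    qed
    finally show "q (s *\<^sub>R y) / s \<le> t + norm (y - t *\<^sub>R (c - c0)) / r"
      using s by (simp add: field_simps)
  qed
  then show "q (s *\<^sub>R y) \<le> s * q y" using s by (simp add: field_simps)
next
  have "q 0 \<le> 0" using separation_gauge_le[OF c0, of 0 0] by simp
  moreover have "0 \<le> q 0" using r by (intro separation_gauge_greatest) auto
  ultimately show "q 0 = 0" by simp
qed

lemma separating_functional_apart:
  assumes far: "\<And>c. c \<in> C \<Longrightarrow> r \<le> norm (x0 - c)"
  shows "\<exists>f::'a \<Rightarrow>\<^sub>L real. blinfun_apply f (x0 - c0) = 1 \<and> (\<forall>c\<in>C. blinfun_apply f c \<le> blinfun_apply f x0)"
proof -
  have q_ge_0: "0 \<le> q y" for y using r by (intro separation_gauge_greatest) auto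
  have "1 \<le> q (x0 - c0)"
  proof (rule separation_gauge_greatest)
    fix c and t :: real assume ct: "c \<in> C" "t \<ge> 0"
    show "1 \<le> t + norm (x0 - c0 - t *\<^sub>R (c - c0)) / r"
    proof (cases "t \<ge> 1")
      case True
      then show ?thesis using r by (simp add: add_increasing2)
    next
      case False
      have "c0 + t *\<^sub>R (c - c0) \<in> C"
        using convexD[OF convex c0 ct(1), of "1 - t" t] ct False by (simp add: algebra_simps)
      from far[OF this] have "r \<le> norm (x0 - c0 - t *\<^sub>R (c - c0))" by (simp add: algebra_simps)
      then have "1 \<le> norm (x0 - c0 - t *\<^sub>R (c - c0)) / r" using r by simp
      then show ?thesis using ct by simp
    qed
  qed
  have "a * 1 \<le> q (a *\<^sub>R (x0 - c0))" for a
  proof (cases "a \<ge> 0")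
    case True
    then have "q (a *\<^sub>R (x0 - c0)) = a * q (x0 - c0)"
      using separation_gauge_sublinear unfolding sublinear_def by blast
    then show ?thesis using mult_left_mono[OF \<open>1 \<le> q (x0 - c0)\<close> True] by simp
  next
    case False
    then show ?thesis using q_ge_0[of "a *\<^sub>R (x0 - c0)"] by simp
  qed
  with hahn_banach_line[OF separation_gauge_sublinear]
  obtain F where F: "linear F" "F (x0 - c0) = 1" "\<And>x. F x \<le> q x" by blast
  have "F x \<le> (1/r) * norm x" for x
    using F(3)[of x] separation_gauge_le[OF c0, of 0 x] by simp
  from linear_bounded_above_imp_blinfun[OF F(1) _ this] r
  obtain f :: "'a \<Rightarrow>\<^sub>L real" where f: "blinfun_apply f = F" by auto
  have "blinfun_apply f c \<le> blinfun_apply f x0" if "c \<in> C" for c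
  proof -
    have "F (c - c0) \<le> 1" using F(3)[of "c - c0"] separation_gauge_le[OF that, of 1 "c - c0"] by simp
    then show ?thesis using F(2) f linear_diff[OF F(1)] by simp
  qed
  then show ?thesis using f F(2) by auto
qed

end

text \<open>Strict separation: thickening \<open>C\<close> by half its distance to \<open>x0\<close> turns the non-strict
  separation of the thickened set into a strict one for \<open>C\<close>.\<close>

lemma separating_functional_closed_convex:
  fixes C :: "'a::real_normed_vector set"
  assumes "closed C" "convex C" "x0 \<notin> C"
  shows "\<exists>f::'a \<Rightarrow>\<^sub>L real. \<exists>\<delta>>0. \<forall>c\<in>C. blinfun_apply f c \<le> blinfun_apply f x0 - \<delta>"
proof (cases "C = {}")
  case True
  then show ?thesis by (intro exI[of _ 0] exI[of _ 1]) auto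
next
  case False
  then obtain c0 where c0: "c0 \<in> C" by blast
  define r where "r = infdist x0 C"
  have r: "r > 0" unfolding r_def using infdist_pos_not_in_closed assms False by blast
  define C' where "C' = (\<Union>c\<in>C. \<Union>w\<in>cball 0 (r/2). {c + w})"
  have convex': "convex C'" unfolding C'_def by (intro convex_sums assms(2) convex_cball)
  have c0': "c0 \<in> C'" unfolding C'_def using c0 r by force
  have far': "r/2 \<le> norm (x0 - d)" if d: "d \<in> C'" for d
  proof -
    obtain c w where cw: "d = c + w" "c \<in> C" "w \<in> cball 0 (r/2)" using d unfolding C'_def by blast
    have "r \<le> dist x0 c" unfolding r_def using infdist_le[OF cw(2)] .
    also have "\<dots> = norm ((x0 - d) + w)" using cw by (simp add: dist_norm algebra_simps)
    also have "\<dots> \<le> norm (x0 - d) + norm w" by (rule norm_triangle_ineq)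
    finally show ?thesis using cw(3) by simp
  qed
  have "r/2 > 0" using r by simp
  from separating_functional_apart[OF convex' c0' this far'] obtain f :: "'a \<Rightarrow>\<^sub>L real" where
    f: "blinfun_apply f (x0 - c0) = 1" "\<And>d. d \<in> C' \<Longrightarrow> blinfun_apply f d \<le> blinfun_apply f x0"
    by blast
  define w where "w = (r / 2 / norm (x0 - c0)) *\<^sub>R (x0 - c0)"
  have "x0 \<noteq> c0" using f(1) by auto
  then have w: "norm w \<le> r / 2" "blinfun_apply f w > 0"
    using f(1) r by (auto simp: w_def blinfun.scaleR_right)
  have "blinfun_apply f c \<le> blinfun_apply f x0 - blinfun_apply f w" if "c \<in> C" for c
  proof -
    have "c + w \<in> C'" unfolding C'_def using that w(1) by force
    from f(2)[OF this] show ?thesis by (simp add: blinfun.add_right)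
  qed
  with w(2) show ?thesis by blast
qed

lemma separating_functional_subspace:
  fixes S :: "'a::real_normed_vector set"
  assumes "closed S" "subspace S" "y \<notin> S"
  shows "\<exists>h::'a \<Rightarrow>\<^sub>L real. (\<forall>s\<in>S. blinfun_apply h s = 0) \<and> blinfun_apply h y > 0"
proof -
  from separating_functional_closed_convex[OF assms(1) subspace_imp_convex[OF assms(2)] assms(3)]
  obtain h :: "'a \<Rightarrow>\<^sub>L real" and \<delta> where
    h: "\<delta> > 0" "\<And>s. s \<in> S \<Longrightarrow> blinfun_apply h s \<le> blinfun_apply h y - \<delta>" by blast
  have vanish: "blinfun_apply h s = 0" if "s \<in> S" for s
  proof (rule ccontr)
    assume nz: "blinfun_apply h s \<noteq> 0"
    define t where "t = (\<bar>blinfun_apply h y\<bar> + 1) / blinfun_apply h s"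
    have "blinfun_apply h (t *\<^sub>R s) \<le> blinfun_apply h y - \<delta>"
      using h(2) subspace_scale[OF assms(2) that] by blast
    moreover have "blinfun_apply h (t *\<^sub>R s) = \<bar>blinfun_apply h y\<bar> + 1"
      using nz unfolding t_def by (simp add: blinfun.scaleR_right)
    ultimately show False using h(1) by linarith
  qed
  then show ?thesis using h subspace_0[OF assms(2)] by (intro exI[of _ h]) force
qed

section \<open>Weak convergence\<close>

lemma tendsto_imp_weakly_conv: "x \<longlonglongrightarrow> l \<Longrightarrow> weakly_conv x l"
  unfolding weakly_conv_def by (auto intro: blinfun.tendsto)

lemma weakly_conv_subseq: "weakly_conv x l \<Longrightarrow> strict_mono r \<Longrightarrow> weakly_conv (x \<circ> r) l"
  unfolding weakly_conv_def by (auto simp: o_def intro: LIMSEQ_subseq_LIMSEQ[of _ _ r, unfolded o_def])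

lemma weakly_conv_in_closed_convex:
  fixes C :: "'a::real_normed_vector set"
  assumes "closed C" "convex C" "weakly_conv x l" "\<And>n. x n \<in> C"
  shows "l \<in> C"
proof (rule ccontr)
  assume "l \<notin> C"
  from separating_functional_closed_convex[OF assms(1,2) this] obtain f :: "'a \<Rightarrow>\<^sub>L real" and \<delta> where
    f: "\<delta> > 0" "\<And>c. c \<in> C \<Longrightarrow> blinfun_apply f c \<le> blinfun_apply f l - \<delta>" by blast
  have "(\<lambda>n. blinfun_apply f (x n)) \<longlonglongrightarrow> blinfun_apply f l"
    using assms(3) unfolding weakly_conv_def by blast
  then have "blinfun_apply f l \<le> blinfun_apply f l - \<delta>"
    by (rule LIMSEQ_le_const2) (use f assms(4) in auto)
  then show False using f by simp
qed

section \<open>Weak sequential compactness in reflexive spaces\<close>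

lemma subspace_closure_if_Rats_closed:
  fixes D :: "'a::real_normed_vector set"
  assumes zero: "0 \<in> D" and add: "\<And>x y. x \<in> D \<Longrightarrow> y \<in> D \<Longrightarrow> x + y \<in> D"
    and scale: "\<And>q x. q \<in> \<rat> \<Longrightarrow> x \<in> D \<Longrightarrow> q *\<^sub>R x \<in> D"
  shows "subspace (closure D)"
proof (rule subspaceI)
  show "0 \<in> closure D" using zero closure_subset by blast
next
  fix x y assume "x \<in> closure D" "y \<in> closure D"
  then obtain xs ys where xs: "\<And>n. xs n \<in> D" "xs \<longlonglongrightarrow> x" and ys: "\<And>n. ys n \<in> D" "ys \<longlonglongrightarrow> y"
    unfolding closure_sequential by blast
  have "\<forall>n. xs n + ys n \<in> D" using xs(1) ys(1) add by blast
  moreover have "(\<lambda>n. xs n + ys n) \<longlonglongrightarrow> x + y" using xs(2) ys(2) by (rule tendsto_add)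
  ultimately show "x + y \<in> closure D"
    unfolding closure_sequential by (intro exI[of _ "\<lambda>n. xs n + ys n"]) simp
next
  fix c :: real and x assume "x \<in> closure D"
  then obtain xs where xs: "\<And>n. xs n \<in> D" "xs \<longlonglongrightarrow> x" unfolding closure_sequential by blast
  have "c \<in> closure \<rat>" using Rats_closure_real by simp
  then obtain qs where qs: "\<And>n. qs n \<in> \<rat>" "qs \<longlonglongrightarrow> c" unfolding closure_sequential by blast
  have "\<forall>n. qs n *\<^sub>R xs n \<in> D" using xs(1) qs(1) scale by blast
  moreover have "(\<lambda>n. qs n *\<^sub>R xs n) \<longlonglongrightarrow> c *\<^sub>R x" using qs(2) xs(2) by (rule tendsto_scaleR)
  ultimately show "c *\<^sub>R x \<in> closure D"
    unfolding closure_sequential by (intro exI[of _ "\<lambda>n. qs n *\<^sub>R xs n"]) simp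
qed

text \<open>Rational rather than real combinations, so that the closed span of a sequence has a
  countable dense subset.\<close>

definition rat_combination :: "(nat \<Rightarrow> 'a::real_vector) \<Rightarrow> rat list \<Rightarrow> 'a" where
  "rat_combination x cs = (\<Sum>i<length cs. of_rat (cs ! i) *\<^sub>R x i)"

lemma rat_combination_padded:
  assumes "length cs \<le> N"
  shows "rat_combination x cs = (\<Sum>i<N. of_rat (if i < length cs then cs ! i else 0) *\<^sub>R x i)"
proof -
  have "(\<Sum>i<N. of_rat (if i < length cs then cs ! i else 0) *\<^sub>R x i)
      = (\<Sum>i<length cs. of_rat (if i < length cs then cs ! i else 0) *\<^sub>R x i)"
    by (rule sum.mono_neutral_right) (use assms in auto)
  then show ?thesis unfolding rat_combination_def by simp
qed

lemma rat_combination_add: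
  "rat_combination x cs + rat_combination x ds \<in> range (rat_combination x)"
proof -
  define N where "N = max (length cs) (length ds)"
  define nth0 where "nth0 es i = (if i < length es then es ! i else 0)" for es :: "rat list" and i
  define es where "es = map (\<lambda>i. nth0 cs i + nth0 ds i) [0..<N]"
  have "rat_combination x es = (\<Sum>i<N. of_rat (nth0 es i) *\<^sub>R x i)"
    unfolding nth0_def by (rule rat_combination_padded) (simp add: es_def)
  also have "\<dots> = (\<Sum>i<N. of_rat (nth0 cs i) *\<^sub>R x i + of_rat (nth0 ds i) *\<^sub>R x i)"
    by (rule sum.cong) (auto simp: es_def nth0_def of_rat_add scaleR_add_left)
  also have "\<dots> = rat_combination x cs + rat_combination x ds"
    using rat_combination_padded[of cs N x] rat_combination_padded[of ds N x]
    unfolding N_def nth0_def by (simp add: sum.distrib)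
  finally have "rat_combination x cs + rat_combination x ds = rat_combination x es" by simp
  then show ?thesis by (rule range_eqI)
qed

lemma rat_combination_scale: "rat_combination x (map ((*) q) cs) = of_rat q *\<^sub>R rat_combination x cs"
  unfolding rat_combination_def by (simp add: scaleR_sum_right of_rat_mult)

lemma rat_combination_basis: "rat_combination x (replicate n 0 @ [1]) = x n"
proof -
  have "rat_combination x (replicate n 0 @ [1])
      = (\<Sum>i<n. of_rat ((replicate n 0 @ [1]) ! i) *\<^sub>R x i) + x n"
    unfolding rat_combination_def by (simp add: nth_append)
  also have "(\<Sum>i<n. of_rat ((replicate n 0 @ [1]) ! i) *\<^sub>R x i) = 0"
    by (rule sum.neutral) (auto simp: nth_append)
  finally show ?thesis by simp
qed

lemma subspace_closure_rat_combinations: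
  fixes x :: "nat \<Rightarrow> 'a::real_normed_vector"
  shows "subspace (closure (range (rat_combination x)))"
proof (rule subspace_closure_if_Rats_closed)
  have "0 = rat_combination x []" by (simp add: rat_combination_def)
  then show "0 \<in> range (rat_combination x)" by (rule range_eqI)
next
  fix y z assume "y \<in> range (rat_combination x)" "z \<in> range (rat_combination x)"
  then obtain cs ds where "y = rat_combination x cs" "z = rat_combination x ds" by blast
  then show "y + z \<in> range (rat_combination x)" using rat_combination_add by blast
next
  fix q :: real and y assume "q \<in> \<rat>" "y \<in> range (rat_combination x)"
  then obtain r cs where "q = of_rat r" "y = rat_combination x cs" using Rats_cases by blast
  then have "q *\<^sub>R y = rat_combination x (map ((*) r) cs)" by (simp add: rat_combination_scale)
  then show "q *\<^sub>R y \<in> range (rat_combination x)" by (rule range_eqI)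
qed

lemma countable_norming_functionals:
  fixes D :: "'a::real_normed_vector set"
  assumes "countable D" "D \<noteq> {}"
  obtains F :: "nat \<Rightarrow> 'a \<Rightarrow>\<^sub>L real" where "\<And>j. norm (F j) \<le> 1"
    "\<And>y. y \<in> closure D \<Longrightarrow> (\<And>j. blinfun_apply (F j) y = 0) \<Longrightarrow> y = 0"
proof -
  define d where "d = from_nat_into D"
  have "\<forall>j. \<exists>f::'a \<Rightarrow>\<^sub>L real. norm f \<le> 1 \<and> blinfun_apply f (d j) = norm (d j)"
    using norming_functional by blast
  then obtain F :: "nat \<Rightarrow> 'a \<Rightarrow>\<^sub>L real"
    where F: "\<And>j. norm (F j) \<le> 1" "\<And>j. blinfun_apply (F j) (d j) = norm (d j)"
    by metis
  have "y = 0" if y: "y \<in> closure D" and Fy: "\<And>j. blinfun_apply (F j) y = 0" for y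
  proof (rule ccontr)
    assume "y \<noteq> 0"
    then have "norm y / 3 > 0" by simp
    then obtain d' where d': "d' \<in> D" "dist d' y < norm y / 3"
      using y unfolding closure_approachable by blast
    obtain j where j: "d j = d'" using from_nat_into_surj[OF assms(1) d'(1)] unfolding d_def by blast
    have "norm (d j) = blinfun_apply (F j) (d j - y)"
      using F(2)[of j] Fy[of j] by (simp add: blinfun.diff_right)
    also have "\<dots> \<le> norm (F j) * norm (d j - y)" using abs_blinfun_apply_le[of "F j" "d j - y"] by simp
    also have "\<dots> \<le> norm (d j - y)" using F(1)[of j] by (simp add: mult_left_le_one_le)
    finally have "norm (d j) < norm y / 3" using d' j by (simp add: dist_norm)
    moreover have "norm y \<le> norm (d j) + norm (y - d j)" using norm_triangle_ineq[of "d j" "y - d j"] by simp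
    moreover have "norm (y - d j) < norm y / 3" using d' j by (simp add: dist_norm norm_minus_commute)
    ultimately show False using norm_ge_zero[of y] by linarith
  qed
  with F(1) show thesis using that by blast
qed

lemma bounded_diagonal_subseq:
  fixes a :: "nat \<Rightarrow> nat \<Rightarrow> real"
  assumes "\<And>j n. \<bar>a j n\<bar> \<le> R"
  obtains \<sigma> :: "nat \<Rightarrow> nat" where "strict_mono \<sigma>" "\<And>j. convergent (\<lambda>k. a j (\<sigma> k))"
proof -
  interpret S: subseqs "\<lambda>j s. convergent (\<lambda>k. a j (s k))"
  proof
    fix j and s :: "nat \<Rightarrow> nat"
    have "bounded (range (\<lambda>k. a j (s k)))" unfolding bounded_iff using assms by auto
    from bounded_imp_convergent_subsequence[OF this] obtain l r where
      "strict_mono r" "((\<lambda>k. a j (s k)) \<circ> r) \<longlonglongrightarrow> l" by blast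
    then show "\<exists>r'. strict_mono r' \<and> convergent (\<lambda>k. a j ((s \<circ> r') k))"
      by (auto simp: convergent_def o_def)
  qed
  have "convergent (\<lambda>k. a j (S.diagseq k))" for j
  proof -
    have "convergent (\<lambda>k. a j ((S.diagseq \<circ> (+) (Suc j)) k))"
    proof (rule S.diagseq_holds)
      fix r s :: "nat \<Rightarrow> nat" and n assume "strict_mono r" "convergent (\<lambda>k. a n (s k))"
      from convergent_subseq_convergent[OF this(2) this(1)]
      show "convergent (\<lambda>k. a n ((s \<circ> r) k))" by (simp add: o_def)
    qed
    then obtain L where "(\<lambda>k. a j (S.diagseq (k + Suc j))) \<longlonglongrightarrow> L"
      unfolding convergent_def by (auto simp: o_def add.commute)
    then have "(\<lambda>k. a j (S.diagseq k)) \<longlonglongrightarrow> L" by (rule LIMSEQ_offset)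
    then show ?thesis unfolding convergent_def by blast
  qed
  with S.subseq_diagseq show thesis using that by blast
qed

lemma subspace_convergent_functionals:
  "subspace {g :: 'a::real_normed_vector \<Rightarrow>\<^sub>L real. convergent (\<lambda>k. blinfun_apply g (x k))}"
proof (rule subspaceI)
  show "0 \<in> {g. convergent (\<lambda>k. blinfun_apply g (x k))}" by (simp add: convergent_const)
  show "g + h \<in> {g. convergent (\<lambda>k. blinfun_apply g (x k))}"
    if "g \<in> {g. convergent (\<lambda>k. blinfun_apply g (x k))}" "h \<in> {g. convergent (\<lambda>k. blinfun_apply g (x k))}" for g h
    using convergent_add that by (simp add: plus_blinfun.rep_eq)
  show "c *\<^sub>R g \<in> {g. convergent (\<lambda>k. blinfun_apply g (x k))}"
    if "g \<in> {g. convergent (\<lambda>k. blinfun_apply g (x k))}" for c g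
  proof -
    from that obtain L where "(\<lambda>k. blinfun_apply g (x k)) \<longlonglongrightarrow> L" by (auto simp: convergent_def)
    then have "(\<lambda>k. blinfun_apply (c *\<^sub>R g) (x k)) \<longlonglongrightarrow> c *\<^sub>R L"
      by (simp add: scaleR_blinfun.rep_eq tendsto_scaleR)
    then show ?thesis by (auto simp: convergent_def)
  qed
qed

lemma closed_convergent_functionals:
  fixes x :: "nat \<Rightarrow> 'a::real_normed_vector"
  assumes bd: "\<And>n. norm (x n) \<le> R"
  shows "closed {g :: 'a \<Rightarrow>\<^sub>L real. convergent (\<lambda>k. blinfun_apply g (x k))}"
    (is "closed ?T")
proof -
  have R: "R \<ge> 0" using bd[of 0] norm_ge_zero[of "x 0"] by linarith
  have "g \<in> ?T" if g: "g \<in> closure ?T" for g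
  proof -
    have "Cauchy (\<lambda>k. blinfun_apply g (x k))"
    proof (rule metric_CauchyI)
      fix e :: real assume e: "e > 0"
      have e': "e / 3 / (R + 1) > 0" using e R by simp
      then obtain g' where g': "g' \<in> ?T" "dist g' g < e / 3 / (R + 1)"
        using g unfolding closure_approachable by blast
      then have "Cauchy (\<lambda>k. blinfun_apply g' (x k))" by (simp add: convergent_Cauchy)
      then obtain N where N: "\<And>m n. m \<ge> N \<Longrightarrow> n \<ge> N \<Longrightarrow>
          dist (blinfun_apply g' (x m)) (blinfun_apply g' (x n)) < e / 3"
        using e unfolding Cauchy_def by (meson divide_pos_pos zero_less_numeral)
      have close: "\<bar>blinfun_apply g (x k) - blinfun_apply g' (x k)\<bar> \<le> e / 3" for k
      proof -
        have "\<bar>blinfun_apply g (x k) - blinfun_apply g' (x k)\<bar> \<le> norm (g - g') * norm (x k)"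
          using abs_blinfun_apply_le[of "g - g'" "x k"] by (simp add: minus_blinfun.rep_eq)
        also have "\<dots> \<le> (e / 3 / (R + 1)) * R"
          using g'(2) bd[of k] e' by (intro mult_mono) (auto simp: dist_norm norm_minus_commute)
        also have "\<dots> \<le> e / 3" using e R by (simp add: field_simps)
        finally show ?thesis .
      qed
      have "dist (blinfun_apply g (x m)) (blinfun_apply g (x n)) < e" if "m \<ge> N" "n \<ge> N" for m n
        using close[of m] close[of n] N[OF that] unfolding dist_real_def by linarith
      then show "\<exists>N. \<forall>m\<ge>N. \<forall>n\<ge>N. dist (blinfun_apply g (x m)) (blinfun_apply g (x n)) < e"
        by blast
    qed
    then show ?thesis by (simp add: Cauchy_convergent_iff)
  qed
  then show ?thesis using closure_subset_eq by blast
qed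

text \<open>A closed subspace \<open>T\<close> of the dual that contains the annihilator of a closed subspace \<open>M\<close>
  and separates the points of \<open>M\<close> is the whole dual: a functional on the dual vanishing on \<open>T\<close>
  is evaluation at some \<open>y\<close>, and \<open>y\<close> is forced into \<open>M\<close> and then to \<open>0\<close>.\<close>

lemma reflexive_dual_subspace_eq_UNIV:
  fixes M :: "'a::real_normed_vector set" and T :: "('a \<Rightarrow>\<^sub>L real) set"
  assumes refl: "reflexive_space TYPE('a)"
    and M: "closed M" "subspace M" and T: "closed T" "subspace T"
    and annihilator: "\<And>h. (\<And>m. m \<in> M \<Longrightarrow> blinfun_apply h m = 0) \<Longrightarrow> h \<in> T"
    and separating: "\<And>y. y \<in> M \<Longrightarrow> (\<And>g. g \<in> T \<Longrightarrow> blinfun_apply g y = 0) \<Longrightarrow> y = 0"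
  shows "T = UNIV"
proof (rule ccontr)
  assume "T \<noteq> UNIV"
  then obtain g where "g \<notin> T" by blast
  from separating_functional_subspace[OF T this] obtain \<Phi> :: "('a \<Rightarrow>\<^sub>L real) \<Rightarrow>\<^sub>L real"
    where \<Phi>: "\<And>t. t \<in> T \<Longrightarrow> blinfun_apply \<Phi> t = 0" "blinfun_apply \<Phi> g > 0" by blast
  obtain y where y: "\<And>f. blinfun_apply \<Phi> f = blinfun_apply f y"
    using refl unfolding reflexive_space_def by blast
  have "y \<in> M"
  proof (rule ccontr)
    assume "y \<notin> M"
    from separating_functional_subspace[OF M this] obtain h :: "'a \<Rightarrow>\<^sub>L real"
      where h: "\<And>m. m \<in> M \<Longrightarrow> blinfun_apply h m = 0" "blinfun_apply h y > 0" by blast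
    from h(1) have "h \<in> T" by (rule annihilator)
    then show False using \<Phi>(1)[of h] y[of h] h(2) by simp
  qed
  moreover have "blinfun_apply t y = 0" if "t \<in> T" for t using \<Phi>(1)[OF that] y[of t] by simp
  ultimately have "y = 0" by (rule separating)
  then show False using \<Phi>(2) y by simp
qed

lemma reflexive_weakly_conv_if_convergent:
  fixes x :: "nat \<Rightarrow> 'a::real_normed_vector"
  assumes refl: "reflexive_space TYPE('a)" and bd: "\<And>n. norm (x n) \<le> R"
    and conv: "\<And>g :: 'a \<Rightarrow>\<^sub>L real. convergent (\<lambda>n. blinfun_apply g (x n))"
  shows "\<exists>l. weakly_conv x l"
proof -
  have R: "R \<ge> 0" using bd[of 0] norm_ge_zero[of "x 0"] by linarith
  define \<Psi> where "\<Psi> g = lim (\<lambda>n. blinfun_apply g (x n))" for g :: "'a \<Rightarrow>\<^sub>L real"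
  have \<Psi>: "(\<lambda>n. blinfun_apply g (x n)) \<longlonglongrightarrow> \<Psi> g" for g
    using conv[of g] unfolding \<Psi>_def by (simp add: convergent_LIMSEQ_iff)
  have "linear \<Psi>"
  proof (rule linearI)
    show "\<Psi> (g + g') = \<Psi> g + \<Psi> g'" for g g'
      using tendsto_add[OF \<Psi>[of g] \<Psi>[of g']] \<Psi>[of "g + g'"]
      by (simp add: plus_blinfun.rep_eq LIMSEQ_unique)
    show "\<Psi> (t *\<^sub>R g) = t *\<^sub>R \<Psi> g" for t g
      using tendsto_mult_left[OF \<Psi>[of g], of t] \<Psi>[of "t *\<^sub>R g"]
      by (simp add: scaleR_blinfun.rep_eq LIMSEQ_unique)
  qed
  moreover have "\<Psi> g \<le> R * norm g" for g
  proof -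
    have "blinfun_apply g (x n) \<le> R * norm g" for n
    proof -
      have "blinfun_apply g (x n) \<le> norm g * norm (x n)"
        using abs_blinfun_apply_le[of g "x n"] by linarith
      also have "\<dots> \<le> R * norm g" using mult_left_mono[OF bd[of n] norm_ge_zero[of g]] by (simp add: mult.commute)
      finally show ?thesis .
    qed
    then show ?thesis using Lim_bounded[OF \<Psi>[of g], of 0] by blast
  qed
  ultimately obtain \<Phi> :: "('a \<Rightarrow>\<^sub>L real) \<Rightarrow>\<^sub>L real" where \<Phi>: "blinfun_apply \<Phi> = \<Psi>"
    using linear_bounded_above_imp_blinfun R by blast
  obtain l where l: "\<And>f. blinfun_apply \<Phi> f = blinfun_apply f l"
    using refl unfolding reflexive_space_def by blast
  have "weakly_conv x l" unfolding weakly_conv_def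
  proof
    fix f :: "'a \<Rightarrow>\<^sub>L real"
    have "\<Psi> f = blinfun_apply f l" using l[of f] unfolding \<Phi> .
    with \<Psi>[of f] show "(\<lambda>n. blinfun_apply f (x n)) \<longlonglongrightarrow> blinfun_apply f l" by simp
  qed
  then show ?thesis by blast
qed

text \<open>The sequence lives in a separable closed subspace \<open>M\<close>; a diagonal subsequence converges
  on countably many functionals separating the points of \<open>M\<close>, hence on all of them.\<close>

theorem reflexive_weakly_convergent_subseq:
  fixes x :: "nat \<Rightarrow> 'a::real_normed_vector"
  assumes refl: "reflexive_space TYPE('a)" and bd: "\<And>n. norm (x n) \<le> R"
  shows "\<exists>\<sigma> l. strict_mono \<sigma> \<and> weakly_conv (x \<circ> \<sigma>) l"
proof -
  define D where "D = range (rat_combination x)"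
  have M: "closed (closure D)" "subspace (closure D)"
    unfolding D_def using subspace_closure_rat_combinations by auto
  have x_in_M: "x n \<in> closure D" for n
    using rat_combination_basis[of x n] closure_subset unfolding D_def by (metis rangeI subsetD)
  obtain F :: "nat \<Rightarrow> 'a \<Rightarrow>\<^sub>L real" where F: "\<And>j. norm (F j) \<le> 1"
    "\<And>y. y \<in> closure D \<Longrightarrow> (\<And>j. blinfun_apply (F j) y = 0) \<Longrightarrow> y = 0"
    using countable_norming_functionals[of D] unfolding D_def by auto
  have "\<bar>blinfun_apply (F j) (x n)\<bar> \<le> R" for j n
  proof -
    have "\<bar>blinfun_apply (F j) (x n)\<bar> \<le> norm (F j) * norm (x n)" by (rule abs_blinfun_apply_le)
    also have "\<dots> \<le> 1 * R" using F(1)[of j] bd[of n] by (intro mult_mono) auto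
    finally show ?thesis by simp
  qed
  then obtain \<sigma> :: "nat \<Rightarrow> nat" where \<sigma>: "strict_mono \<sigma>"
    "\<And>j. convergent (\<lambda>k. blinfun_apply (F j) (x (\<sigma> k)))"
    using bounded_diagonal_subseq[of "\<lambda>j n. blinfun_apply (F j) (x n)"] by blast
  define T where "T = {g :: 'a \<Rightarrow>\<^sub>L real. convergent (\<lambda>k. blinfun_apply g (x (\<sigma> k)))}"
  have "T = UNIV"
  proof (rule reflexive_dual_subspace_eq_UNIV[OF refl M])
    show "closed T" unfolding T_def using bd by (rule closed_convergent_functionals)
    show "subspace T" unfolding T_def by (rule subspace_convergent_functionals)
    show "h \<in> T" if "\<And>m. m \<in> closure D \<Longrightarrow> blinfun_apply h m = 0" for h
      using that x_in_M unfolding T_def by (simp add: convergent_const)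
    show "y = 0" if "y \<in> closure D" "\<And>g. g \<in> T \<Longrightarrow> blinfun_apply g y = 0" for y
      using that F(2) \<sigma>(2) unfolding T_def by blast
  qed
  then obtain l where "weakly_conv (x \<circ> \<sigma>) l"
    using reflexive_weakly_conv_if_convergent[OF refl, of "x \<circ> \<sigma>" R] bd unfolding T_def by auto
  with \<sigma>(1) show ?thesis by blast
qed

section \<open>Bounded closed convex sets in reflexive spaces\<close>

lemma closedin_product_eval_le:
  "closedin (product_topology (\<lambda>_. euclideanreal) UNIV) {\<Phi>. \<Phi> f \<le> (c::real)}"
proof -
  have "closedin (product_topology (\<lambda>_. euclideanreal) UNIV)
          {\<Phi> \<in> topspace (product_topology (\<lambda>_. euclideanreal) UNIV). (\<lambda>\<Phi>. \<Phi> f) \<Phi> \<in> {..c}}"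
    by (rule closedin_continuous_map_preimage) (auto intro: continuous_map_product_projection)
  then show ?thesis by simp
qed

lemma closedin_product_zero_set:
  assumes "continuous_map (product_topology (\<lambda>_. euclideanreal) UNIV) euclideanreal g"
  shows "closedin (product_topology (\<lambda>_. euclideanreal) UNIV) {\<Phi>. g \<Phi> = (0::real)}"
proof -
  have "closedin (product_topology (\<lambda>_. euclideanreal) UNIV)
          {\<Phi> \<in> topspace (product_topology (\<lambda>_. euclideanreal) UNIV). g \<Phi> \<in> {0}}"
    by (rule closedin_continuous_map_preimage[OF assms]) auto
  then show ?thesis by simp
qed

lemma continuous_map_product_eval:
  "continuous_map (product_topology (\<lambda>_. euclideanreal) UNIV) euclideanreal (\<lambda>\<Phi>. \<Phi> f)"
  using continuous_map_product_projection[of f UNIV "\<lambda>_. euclideanreal"] by simp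

text \<open>The Tychonoff part of the argument: the candidate elements of the bidual (linear maps
  bounded by \<open>R * norm f\<close> and below the support functions of finitely many of the sets) form
  closed subsets of a compact product with the finite intersection property, realized by
  evaluation at a common point.\<close>

lemma bidual_below_support_functions:
  fixes \<K> :: "'a::real_normed_vector set set"
  assumes R: "R \<ge> 0" and K: "\<And>K. K \<in> \<K> \<Longrightarrow> K \<subseteq> cball 0 R"
    and fip: "\<And>\<F>. finite \<F> \<Longrightarrow> \<F> \<subseteq> \<K> \<Longrightarrow> \<Inter>\<F> \<noteq> {}"
  shows "\<exists>\<Phi>::('a \<Rightarrow>\<^sub>L real) \<Rightarrow>\<^sub>L real. \<forall>K\<in>\<K>. \<forall>f. blinfun_apply \<Phi> f \<le> (SUP y\<in>K. blinfun_apply f y)"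
proof -
  let ?X = "product_topology (\<lambda>_::'a \<Rightarrow>\<^sub>L real. euclideanreal) UNIV"
  define B where "B = PiE (UNIV :: ('a \<Rightarrow>\<^sub>L real) set) (\<lambda>f. {-(R * norm f)..R * norm f})"
  define E1 where "E1 = (\<lambda>(f, g). {\<Phi>::('a \<Rightarrow>\<^sub>L real) \<Rightarrow> real. \<Phi> (f + g) - \<Phi> f - \<Phi> g = 0})"
  define E2 where "E2 = (\<lambda>(t, f). {\<Phi>::('a \<Rightarrow>\<^sub>L real) \<Rightarrow> real. \<Phi> (t *\<^sub>R f) - t * \<Phi> f = 0})"
  define H where "H = (\<lambda>(f, K). {\<Phi>::('a \<Rightarrow>\<^sub>L real) \<Rightarrow> real. \<Phi> f \<le> (SUP y\<in>K. blinfun_apply f y)})"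
  define \<U> where "\<U> = range E1 \<union> range E2 \<union> H ` (UNIV \<times> \<K>)"
  have bound: "blinfun_apply f u \<in> {-(R * norm f)..R * norm f}" if "norm u \<le> R"
    for f :: "'a \<Rightarrow>\<^sub>L real" and u
  proof -
    have "\<bar>blinfun_apply f u\<bar> \<le> R * norm f"
      using abs_blinfun_apply_le[of f u] mult_left_mono[OF that norm_ge_zero[of f]]
      by (simp add: mult.commute)
    then show ?thesis by (simp add: abs_le_iff)
  qed
  have closed_U: "closedin ?X C" if "C \<in> \<U>" for C
  proof -
    have "closedin ?X (E1 p)" for p
      unfolding E1_def
      by (cases p) (simp only: prod.case,
          intro closedin_product_zero_set continuous_map_diff continuous_map_product_eval)
    moreover have "closedin ?X (E2 p)" for p
      unfolding E2_def
      by (cases p) (simp only: prod.case,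
          intro closedin_product_zero_set continuous_map_diff continuous_map_product_eval
          continuous_map_real_mult_left)
    moreover have "closedin ?X (H p)" for p
      unfolding H_def by (cases p) (simp only: prod.case closedin_product_eval_le)
    ultimately show ?thesis using that unfolding \<U>_def by blast
  qed
  have finite_U: "B \<inter> \<Inter>\<F> \<noteq> {}" if \<F>: "finite \<F>" "\<F> \<subseteq> \<U>" for \<F>
  proof -
    have "\<F> \<inter> H ` (UNIV \<times> \<K>) \<subseteq> H ` (UNIV \<times> \<K>)" by blast
    from finite_subset_image[OF _ this] \<F> obtain G where G: "G \<subseteq> UNIV \<times> \<K>" "finite G"
      "\<F> \<inter> H ` (UNIV \<times> \<K>) = H ` G" by blast
    obtain u where u: "u \<in> \<Inter>(snd ` G)" "norm u \<le> R"
    proof (cases "G = {}")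
      case True
      then show ?thesis using that[of 0] R by auto
    next
      case False
      then obtain p where "p \<in> G" by blast
      have "finite (snd ` G)" "snd ` G \<subseteq> \<K>" using G by auto
      from fip[OF this] obtain u where "u \<in> \<Inter>(snd ` G)" by blast
      moreover have "snd p \<in> \<K>" using \<open>p \<in> G\<close> G(1) by auto
      ultimately show ?thesis using that K \<open>p \<in> G\<close> by fastforce
    qed
    define \<Phi> where "\<Phi> f = blinfun_apply f u" for f :: "'a \<Rightarrow>\<^sub>L real"
    have "\<Phi> \<in> B" unfolding B_def \<Phi>_def using bound[OF u(2)] by (simp add: PiE_iff)
    moreover have "\<Phi> \<in> C" if "C \<in> \<F>" for C
    proof -
      have "C \<in> \<U>" using that \<F>(2) by blast
      then consider p where "C = E1 p" | p where "C = E2 p" | "C \<in> H ` (UNIV \<times> \<K>)"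
        unfolding \<U>_def by blast
      then show ?thesis
      proof cases
        case (1 p)
        then show ?thesis by (cases p) (simp add: E1_def \<Phi>_def plus_blinfun.rep_eq)
      next
        case (2 p)
        then show ?thesis by (cases p) (simp add: E2_def \<Phi>_def scaleR_blinfun.rep_eq)
      next
        case 3
        with that G(3) have "C \<in> H ` G" by blast
        then obtain f K where fK: "(f, K) \<in> G" "C = H (f, K)" by auto
        have "K \<in> \<K>" using fK G(1) by auto
        have "u \<in> K" using u fK by force
        then have "\<Phi> f \<le> (SUP y\<in>K. blinfun_apply f y)" unfolding \<Phi>_def
          using bound K[OF \<open>K \<in> \<K>\<close>] by (intro cSUP_upper) (auto intro!: bdd_aboveI2[of _ _ "R * norm f"])
        then show ?thesis using fK unfolding H_def by simp
      qed
    qed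
    ultimately show ?thesis by blast
  qed
  have "compactin ?X B" unfolding B_def by (simp add: compactin_PiE)
  then have "(\<forall>C\<in>\<U>. closedin ?X C) \<and> (\<forall>\<F>. finite \<F> \<and> \<F> \<subseteq> \<U> \<longrightarrow> B \<inter> \<Inter>\<F> \<noteq> {})
      \<longrightarrow> B \<inter> \<Inter>\<U> \<noteq> {}"
    unfolding compactin_fip by blast
  then have "B \<inter> \<Inter>\<U> \<noteq> {}" using closed_U finite_U by blast
  then obtain \<Phi> where \<Phi>B: "\<Phi> \<in> B" and \<Phi>U: "\<And>C. C \<in> \<U> \<Longrightarrow> \<Phi> \<in> C" by blast
  have "linear \<Phi>"
  proof (rule linearI)
    fix f g :: "'a \<Rightarrow>\<^sub>L real" and t :: real
    have "E1 (f, g) \<in> \<U>" "E2 (t, f) \<in> \<U>" unfolding \<U>_def by blast+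
    from this[THEN \<Phi>U] show "\<Phi> (f + g) = \<Phi> f + \<Phi> g" "\<Phi> (t *\<^sub>R f) = t *\<^sub>R \<Phi> f"
      unfolding E1_def E2_def by simp_all
  qed
  moreover have "\<Phi> f \<le> R * norm f" for f using \<Phi>B unfolding B_def by (simp add: PiE_iff)
  ultimately obtain \<phi> :: "('a \<Rightarrow>\<^sub>L real) \<Rightarrow>\<^sub>L real" where "blinfun_apply \<phi> = \<Phi>"
    using linear_bounded_above_imp_blinfun R by blast
  moreover have "\<Phi> f \<le> (SUP y\<in>K. blinfun_apply f y)" if "K \<in> \<K>" for K f
  proof -
    have "H (f, K) \<in> \<U>" using that unfolding \<U>_def by blast
    from \<Phi>U[OF this] show ?thesis unfolding H_def by simp
  qed
  ultimately show ?thesis by auto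
qed

theorem reflexive_Inter_closed_convex_nonempty:
  fixes \<K> :: "'a::real_normed_vector set set"
  assumes refl: "reflexive_space TYPE('a)"
    and K: "\<And>K. K \<in> \<K> \<Longrightarrow> closed K \<and> convex K \<and> K \<subseteq> cball 0 R"
    and fip: "\<And>\<F>. finite \<F> \<Longrightarrow> \<F> \<subseteq> \<K> \<Longrightarrow> \<Inter>\<F> \<noteq> {}"
  shows "\<Inter>\<K> \<noteq> {}"
proof (cases "\<K> = {}")
  case False
  then obtain K0 where K0: "K0 \<in> \<K>" by blast
  have "\<Inter>{K0} \<noteq> {}" using fip[of "{K0}"] K0 by simp
  then obtain k where "k \<in> K0" by auto
  then have "k \<in> cball 0 R" using K[OF K0] by blast
  then have "norm k \<le> R" by simp
  then have R: "R \<ge> 0" using norm_ge_zero[of k] by linarith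
  have "\<And>K. K \<in> \<K> \<Longrightarrow> K \<subseteq> cball 0 R" using K by blast
  from bidual_below_support_functions[OF R this fip]
  obtain \<phi> :: "('a \<Rightarrow>\<^sub>L real) \<Rightarrow>\<^sub>L real"
    where \<phi>: "\<forall>K\<in>\<K>. \<forall>f. blinfun_apply \<phi> f \<le> (SUP y\<in>K. blinfun_apply f y)" ..
  obtain y where y: "\<And>f. blinfun_apply \<phi> f = blinfun_apply f y"
    using refl unfolding reflexive_space_def by blast
  have "y \<in> K" if "K \<in> \<K>" for K
  proof (rule ccontr)
    assume "y \<notin> K"
    from K[OF that] have "closed K" "convex K" by auto
    from separating_functional_closed_convex[OF this \<open>y \<notin> K\<close>] obtain f :: "'a \<Rightarrow>\<^sub>L real" and \<delta>
      where f: "\<delta> > 0" "\<And>c. c \<in> K \<Longrightarrow> blinfun_apply f c \<le> blinfun_apply f y - \<delta>" by blast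
    have "K \<noteq> {}" using fip[of "{K}"] that by auto
    then have "(SUP c\<in>K. blinfun_apply f c) \<le> blinfun_apply f y - \<delta>" using f by (intro cSUP_least) auto
    moreover have "blinfun_apply \<phi> f \<le> (SUP c\<in>K. blinfun_apply f c)" using \<phi> that by blast
    ultimately show False using y[of f] f(1) by linarith
  qed
  then show ?thesis by blast
qed simp

section \<open>Convex lower semicontinuous functions\<close>

lemma not_eventually_imp_subseq:
  assumes "\<not> eventually P sequentially"
  shows "\<exists>r::nat\<Rightarrow>nat. strict_mono r \<and> (\<forall>k. \<not> P (r k))"
proof -
  have "infinite {n. \<not> P n}"
    using assms unfolding not_eventually cofinite_eq_sequentially[symmetric] frequently_cofinite by simp
  from infinite_enumerate[OF this] show ?thesis by blast
qed

lemma lower_semicont_sequentially: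
  fixes \<phi> :: "'a::metric_space \<Rightarrow> real"
  assumes "lower_semicont \<phi>" "x \<longlonglongrightarrow> l" "e > 0"
  shows "eventually (\<lambda>n. \<phi> l - e < \<phi> (x n)) sequentially"
proof -
  obtain d where d: "d > 0" "\<And>y. y \<noteq> l \<Longrightarrow> dist y l < d \<Longrightarrow> \<phi> l - e < \<phi> y"
    using assms(1,3) unfolding lower_semicont_def eventually_at by blast
  have "eventually (\<lambda>n. dist (x n) l < d) sequentially" using assms(2) d(1) by (rule tendstoD)
  then show ?thesis
  proof eventually_elim
    case (elim n)
    then show ?case using d assms(3) by (cases "x n = l") auto
  qed
qed

lemma lower_semicont_closed_sublevel:
  fixes \<phi> :: "'a::metric_space \<Rightarrow> real"
  assumes "lower_semicont \<phi>"
  shows "closed {y. \<phi> y \<le> c}"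
  unfolding closed_sequential_limits
proof (intro allI impI)
  fix x l assume xl: "(\<forall>n. x n \<in> {y. \<phi> y \<le> c}) \<and> x \<longlonglongrightarrow> l"
  have "\<phi> l \<le> c + e" if "e > 0" for e
  proof -
    from lower_semicont_sequentially[OF assms conjunct2[OF xl] that]
    obtain n where "\<phi> l - e < \<phi> (x n)" by (auto dest: eventually_happens)
    moreover have "\<phi> (x n) \<le> c" using xl by auto
    ultimately show ?thesis by linarith
  qed
  then show "l \<in> {y. \<phi> y \<le> c}" by (simp add: field_le_epsilon)
qed

lemma convex_on_sublevel:
  assumes "convex_on UNIV \<phi>"
  shows "convex {y. \<phi> y \<le> (c::real)}"
proof (rule convexI)
  fix x y and u v :: real
  assume xy: "x \<in> {y. \<phi> y \<le> c}" "y \<in> {y. \<phi> y \<le> c}" and uv: "0 \<le> u" "0 \<le> v" "u + v = 1"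
  then have u: "u = 1 - v" by simp
  have "\<phi> (u *\<^sub>R x + v *\<^sub>R y) \<le> u * \<phi> x + v * \<phi> y"
    using convex_onD[OF assms, of v x y] uv unfolding u by simp
  also have "\<dots> \<le> u * c + v * c" using xy uv by (intro add_mono mult_left_mono) auto
  finally show "u *\<^sub>R x + v *\<^sub>R y \<in> {y. \<phi> y \<le> c}" using uv by (simp add: distrib_right[symmetric])
qed

text \<open>By Baire's theorem one of the closed sublevel sets \<open>{\<phi> \<le> k}\<close>, \<open>k \<in> \<nat>\<close>, has
  interior.\<close>

lemma convex_lsc_bounded_above_on_ball:
  fixes \<phi> :: "'a::banach \<Rightarrow> real"
  assumes lsc: "lower_semicont \<phi>"
  shows "\<exists>a r k. r > 0 \<and> (\<forall>y\<in>ball a r. \<phi> y \<le> k)"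
proof (rule ccontr)
  assume unbounded: "\<not> ?thesis"
  define \<G> where "\<G> = range (\<lambda>k::nat. {y. \<phi> y \<le> real k})"
  have "euclidean interior_of \<Union>\<G> = {}"
  proof (rule Baire_category_alt)
    show "completely_metrizable_space (euclidean :: 'a topology) \<or>
        locally_compact_space (euclidean :: 'a topology) \<and> regular_space (euclidean :: 'a topology)"
      using completely_metrizable_space_euclidean by blast
    show "countable \<G>" unfolding \<G>_def by simp
    fix T assume "T \<in> \<G>"
    then obtain k :: nat where T: "T = {y. \<phi> y \<le> real k}" unfolding \<G>_def by blast
    have "closed T" unfolding T by (rule lower_semicont_closed_sublevel[OF lsc])
    moreover have "interior T = {}"
    proof (rule ccontr)
      assume "interior T \<noteq> {}"
      then obtain a r where "r > 0" "ball a r \<subseteq> T"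
        by (meson all_not_in_conv open_contains_ball open_interior interior_subset subset_trans)
      then show False using unbounded T by blast
    qed
    ultimately show "closedin euclidean T \<and> euclidean interior_of T = {}"
      by simp
  qed
  moreover have "\<Union>\<G> = UNIV"
    unfolding \<G>_def using real_arch_simple by blast
  ultimately show False by simp
qed

context
  fixes \<phi> :: "'a::banach \<Rightarrow> real"
  assumes convex: "convex_on UNIV \<phi>" and lsc: "lower_semicont \<phi>"
begin

text \<open>An upper bound on a ball around \<open>a\<close> transfers to a ball around any \<open>x\<close> through the
  reflection point \<open>2x - a\<close>.\<close>

lemma convex_lsc_locally_bounded_above: "\<exists>\<rho> M. \<rho> > 0 \<and> (\<forall>y\<in>ball x \<rho>. \<phi> y \<le> M)"
proof -
  obtain a r k where ark: "r > 0" "\<And>y. y \<in> ball a r \<Longrightarrow> \<phi> y \<le> k"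
    using convex_lsc_bounded_above_on_ball[OF lsc] by blast
  define M where "M = (1/2) * \<phi> (2 *\<^sub>R x - a) + (1/2) * k"
  have "\<phi> y \<le> M" if "y \<in> ball x (r / 2)" for y
  proof -
    define z where "z = a + 2 *\<^sub>R (y - x)"
    have "z \<in> ball a r" using that by (simp add: z_def dist_norm norm_minus_commute)
    then have "\<phi> z \<le> k" by (rule ark(2))
    moreover have "y = (1 - 1/2) *\<^sub>R (2 *\<^sub>R x - a) + (1/2) *\<^sub>R z" by (simp add: z_def algebra_simps)
    ultimately show ?thesis
      using convex_onD[OF convex, of "1/2" "2 *\<^sub>R x - a" z] by (simp add: M_def)
  qed
  then show ?thesis using ark(1) by (intro exI[of _ "r/2"] exI[of _ M]) auto
qed

theorem convex_lsc_continuous: "continuous_on UNIV \<phi>"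
proof -
  have "isCont \<phi> x" for x
  proof -
    obtain \<rho> M where \<rho>: "\<rho> > 0" "\<And>y. y \<in> ball x \<rho> \<Longrightarrow> \<phi> y \<le> M"
      using convex_lsc_locally_bounded_above by blast
    have "\<bar>\<phi> y\<bar> \<le> \<bar>M\<bar> + 2 * \<bar>\<phi> x\<bar>" if "y \<in> ball x \<rho>" for y
    proof -
      have eq: "x - (2 *\<^sub>R x - y) = - (x - y)" by (simp add: algebra_simps scaleR_2)
      have "2 *\<^sub>R x - y \<in> ball x \<rho>" using that unfolding mem_ball dist_norm eq by (simp add: norm_minus_commute)
      moreover have "x = (1 - 1/2) *\<^sub>R y + (1/2) *\<^sub>R (2 *\<^sub>R x - y)" by (simp add: algebra_simps)
      then have "\<phi> x \<le> (1/2) * \<phi> y + (1/2) * \<phi> (2 *\<^sub>R x - y)"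
        using convex_onD[OF convex, of "1/2" y "2 *\<^sub>R x - y"] by simp
      ultimately show ?thesis using \<rho>(2)[OF that] \<rho>(2)[of "2 *\<^sub>R x - y"] by linarith
    qed
    then have "continuous_on (ball x \<rho>) \<phi>"
      using convex_on_subset[OF convex] by (intro convex_on_bounded_continuous) auto
    then show ?thesis using \<rho>(1) by (intro continuous_on_interior) auto
  qed
  then show ?thesis by (simp add: continuous_at_imp_continuous_on)
qed

lemma convex_lsc_linear_lower_bound: "\<exists>b\<ge>0. \<forall>x. \<phi> 0 - b * norm x \<le> \<phi> x"
proof -
  obtain \<rho> M where \<rho>: "\<rho> > 0" "\<And>y. y \<in> ball 0 \<rho> \<Longrightarrow> \<phi> y \<le> M"
    using convex_lsc_locally_bounded_above by blast
  define s where "s = \<rho> / 2"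
  have s: "s > 0" "s < \<rho>" using \<rho> by (auto simp: s_def)
  have M0: "\<phi> 0 \<le> M" using \<rho> by auto
  define b where "b = (M - \<phi> 0) / s"
  have "\<phi> 0 - b * norm x \<le> \<phi> x" for x
  proof (cases "x = 0")
    case False
    define n where "n = norm x"
    have n: "n > 0" using False by (simp add: n_def)
    define t where "t = n / (s + n)"
    have t: "0 \<le> t" "t \<le> 1" "1 - t = s / (s + n)" using n s by (auto simp: t_def field_simps)
    have "t * (- s / n) = - (1 - t)" using n s by (simp add: t t_def field_simps)
    then have eq: "(1 - t) *\<^sub>R x + t *\<^sub>R ((- s / n) *\<^sub>R x) = 0" by (simp add: scaleR_scaleR)
    have "\<phi> ((1 - t) *\<^sub>R x + t *\<^sub>R ((- s / n) *\<^sub>R x)) \<le> (1 - t) * \<phi> x + t * \<phi> ((- s / n) *\<^sub>R x)"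
      using convex_onD[OF convex t(1,2)] by blast
    then have "\<phi> 0 \<le> (1 - t) * \<phi> x + t * \<phi> ((- s / n) *\<^sub>R x)" unfolding eq .
    also have "\<dots> \<le> (1 - t) * \<phi> x + t * M"
      using \<rho>(2)[of "(- s / n) *\<^sub>R x"] s n t by (intro add_left_mono mult_left_mono) (auto simp: n_def)
    finally have "(s + n) * \<phi> 0 \<le> (s + n) * ((1 - t) * \<phi> x + t * M)"
      using n s by (intro mult_left_mono) auto
    also have "\<dots> = ((s + n) * (1 - t)) * \<phi> x + ((s + n) * t) * M" by (simp add: algebra_simps)
    also have "(s + n) * (1 - t) = s" using n s by (simp add: t(3))
    also have "(s + n) * t = n" using n s by (simp add: t_def)
    finally have "(s + n) * \<phi> 0 \<le> s * \<phi> x + n * M" .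
    then show ?thesis using n s by (simp add: b_def n_def field_simps)
  qed simp
  then show ?thesis using M0 s by (intro exI[of _ b]) (auto simp: b_def)
qed

end

text \<open>The sublevel sets are closed and convex, hence weakly closed.\<close>

lemma convex_continuous_weakly_lsc:
  fixes \<phi> :: "'a::real_normed_vector \<Rightarrow> real"
  assumes convex: "convex_on UNIV \<phi>" and cont: "continuous_on UNIV \<phi>"
    and w: "weakly_conv x l" and e: "e > 0"
  shows "eventually (\<lambda>n. \<phi> l - e < \<phi> (x n)) sequentially"
proof (rule ccontr)
  assume "\<not> ?thesis"
  from not_eventually_imp_subseq[OF this] obtain r :: "nat \<Rightarrow> nat" where
    r: "strict_mono r" "\<And>k. \<phi> (x (r k)) \<le> \<phi> l - e" by (auto simp: not_less)
  have "closed {y. \<phi> y \<le> \<phi> l - e}" using cont by (intro closed_Collect_le) auto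
  then have "l \<in> {y. \<phi> y \<le> \<phi> l - e}"
    using weakly_conv_in_closed_convex[OF _ convex_on_sublevel[OF convex] weakly_conv_subseq[OF w r(1)]] r(2)
    by auto
  then show False using e by simp
qed

section \<open>Pseudomonotone operators\<close>

lemma pseudomonotoneD:
  fixes A :: "'a::real_normed_vector \<Rightarrow> ('a \<Rightarrow>\<^sub>L real)"
  assumes pm: "pseudomonotone A" and w: "weakly_conv u w"
    and small: "\<And>e. e > 0 \<Longrightarrow> eventually (\<lambda>n. blinfun_apply (A (u n)) (u n - w) < e) sequentially"
    and e: "e > 0"
  shows "eventually (\<lambda>n. blinfun_apply (A w) (w - v) - e < blinfun_apply (A (u n)) (u n - v)) sequentially"
proof -
  have "limsup (\<lambda>n. ereal (blinfun_apply (A (u n)) (u n - w))) \<le> 0"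
    unfolding Limsup_le_iff
  proof (intro allI impI)
    fix y :: ereal assume "y > 0"
    then show "\<forall>\<^sub>F n in sequentially. ereal (blinfun_apply (A (u n)) (u n - w)) < y"
    proof (cases y)
      case (real r)
      with \<open>y > 0\<close> small[of r] show ?thesis by (auto elim: eventually_mono)
    qed auto
  qed
  with pm w have "ereal (blinfun_apply (A w) (w - v)) \<le> liminf (\<lambda>n. ereal (blinfun_apply (A (u n)) (u n - v)))"
    unfolding pseudomonotone_def by blast
  then have "\<forall>y < ereal (blinfun_apply (A w) (w - v)).
      eventually (\<lambda>n. y < ereal (blinfun_apply (A (u n)) (u n - v))) sequentially"
    unfolding le_Liminf_iff by blast
  from this[rule_format, of "ereal (blinfun_apply (A w) (w - v) - e)"] e show ?thesis by simp
qed

lemma pseudomonotone_bounded_seq: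
  fixes A :: "'a::real_normed_vector \<Rightarrow> ('a \<Rightarrow>\<^sub>L real)"
  assumes "pseudomonotone A" "\<And>n. norm (u n) \<le> R"
  shows "\<exists>K. \<forall>n. norm (A (u n)) \<le> K"
proof -
  have "bounded (range u)" using assms(2) unfolding bounded_iff by blast
  then have "bounded (A ` range u)" using assms(1) unfolding pseudomonotone_def bounded_operator_def by blast
  then show ?thesis unfolding bounded_iff by auto
qed

lemma bounded_apply_tendsto_zero:
  fixes f :: "nat \<Rightarrow> 'a::real_normed_vector \<Rightarrow>\<^sub>L real"
  assumes "\<And>n. norm (f n) \<le> K" "d \<longlonglongrightarrow> 0"
  shows "(\<lambda>n. blinfun_apply (f n) (d n)) \<longlonglongrightarrow> 0"
proof (rule Lim_null_comparison)
  have "norm (blinfun_apply (f n) (d n)) \<le> K * norm (d n)" for n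
    using norm_blinfun[of "f n" "d n"] mult_right_mono[OF assms(1)[of n] norm_ge_zero[of "d n"]]
    by linarith
  then show "eventually (\<lambda>n. norm (blinfun_apply (f n) (d n)) \<le> K * norm (d n)) sequentially"
    by simp
  show "(\<lambda>n. K * norm (d n)) \<longlonglongrightarrow> 0"
    using tendsto_mult_right_zero[OF tendsto_norm_zero[OF assms(2)]] .
qed

lemma pseudomonotone_demicontinuous:
  fixes A :: "'a::real_normed_vector \<Rightarrow> ('a \<Rightarrow>\<^sub>L real)"
  assumes pm: "pseudomonotone A" and u: "u \<longlonglongrightarrow> w"
  shows "(\<lambda>n. blinfun_apply (A (u n)) z) \<longlonglongrightarrow> blinfun_apply (A w) z"
proof -
  obtain R where "\<And>n. norm (u n) \<le> R"
    using convergent_imp_Bseq[of u] u unfolding Bseq_def convergent_def by auto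
  then obtain K where "\<And>n. norm (A (u n)) \<le> K" using pseudomonotone_bounded_seq[OF pm] by blast
  moreover have "(\<lambda>n. u n - w) \<longlonglongrightarrow> 0" using u by (rule LIM_zero)
  ultimately have small: "(\<lambda>n. blinfun_apply (A (u n)) (u n - w)) \<longlonglongrightarrow> 0"
    by (rule bounded_apply_tendsto_zero)
  have lower: "eventually (\<lambda>n. blinfun_apply (A w) (w - v) - e < blinfun_apply (A (u n)) (u n - v)) sequentially"
    if "e > 0" for v e
  proof (rule pseudomonotoneD[OF pm tendsto_imp_weakly_conv[OF u] _ that])
    show "eventually (\<lambda>n. blinfun_apply (A (u n)) (u n - w) < e') sequentially" if "e' > 0" for e'
      using small that by (rule order_tendstoD(2))
  qed
  show ?thesis
  proof (rule tendstoI)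
    fix e :: real assume "e > 0"
    then have e2: "e / 2 > 0" by simp
    have eqs: "blinfun_apply (A (u n)) (u n - (w - z)) = blinfun_apply (A (u n)) (u n - w) + blinfun_apply (A (u n)) z"
      "blinfun_apply (A (u n)) (u n - (w + z)) = blinfun_apply (A (u n)) (u n - w) - blinfun_apply (A (u n)) z"
      "blinfun_apply (A w) (w - (w - z)) = blinfun_apply (A w) z"
      "blinfun_apply (A w) (w - (w + z)) = - blinfun_apply (A w) z" for n
      by (simp_all add: blinfun.diff_right blinfun.add_right blinfun.minus_right)
    from lower[OF e2, of "w - z"] lower[OF e2, of "w + z"] tendstoD[OF small e2]
    show "eventually (\<lambda>n. dist (blinfun_apply (A (u n)) z) (blinfun_apply (A w) z) < e) sequentially"
    proof eventually_elim
      case (elim n)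
      then show ?case unfolding eqs by (auto simp: dist_real_def abs_less_iff)
    qed
  qed
qed

text \<open>Minty's trick: testing the inequality at the points \<open>u + t (z - u)\<close> and letting
  \<open>t \<rightarrow> 0\<close> moves the operator from \<open>z\<close> to the solution \<open>u\<close>.\<close>

lemma solves_VI_if_minty:
  fixes A :: "'a::real_normed_vector \<Rightarrow> ('a \<Rightarrow>\<^sub>L real)"
  assumes pm: "pseudomonotone A" and C: "convex C" and uC: "u \<in> C" and cv: "convex_on UNIV \<phi>"
    and minty: "\<And>z. z \<in> C \<Longrightarrow> blinfun_apply (A z - g) (z - u) + \<phi> z - \<phi> u \<ge> 0"
  shows "solves_VI A g \<phi> C u"
  unfolding solves_VI_def
proof (intro conjI ballI uC)
  fix z assume zC: "z \<in> C"
  define t where "t n = 1 / (real n + 1)" for n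
  have t: "t n > 0" "t n \<le> 1" for n unfolding t_def by (auto simp: field_simps)
  define zt where "zt n = u + t n *\<^sub>R (z - u)" for n
  have zt: "zt n = (1 - t n) *\<^sub>R u + t n *\<^sub>R z" for n by (simp add: zt_def algebra_simps)
  have "0 \<le> blinfun_apply (A (zt n) - g) (z - u) + \<phi> z - \<phi> u" for n
  proof -
    have "zt n \<in> C" unfolding zt using convexD[OF C uC zC, of "1 - t n" "t n"] t[of n] by simp
    from minty[OF this] have "0 \<le> blinfun_apply (A (zt n) - g) (zt n - u) + \<phi> (zt n) - \<phi> u" .
    moreover have "blinfun_apply (A (zt n) - g) (zt n - u) = t n * blinfun_apply (A (zt n) - g) (z - u)"
      unfolding zt_def by (simp add: blinfun.scaleR_right)
    moreover have "\<phi> (zt n) \<le> (1 - t n) * \<phi> u + t n * \<phi> z"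
      unfolding zt using convex_onD[OF cv, of "t n" u z] t[of n] by simp
    ultimately have "0 \<le> t n * (blinfun_apply (A (zt n) - g) (z - u) + \<phi> z - \<phi> u)"
      by (simp add: algebra_simps)
    then show ?thesis using t[of n] by (simp add: zero_le_mult_iff)
  qed
  moreover have "t \<longlonglongrightarrow> 0"
    unfolding t_def using LIMSEQ_inverse_real_of_nat by (simp add: inverse_eq_divide add.commute)
  then have "zt \<longlonglongrightarrow> u + 0 *\<^sub>R (z - u)" unfolding zt_def by (intro tendsto_intros)
  then have "(\<lambda>n. blinfun_apply (A (zt n) - g) (z - u) + \<phi> z - \<phi> u)
      \<longlonglongrightarrow> blinfun_apply (A u - g) (z - u) + \<phi> z - \<phi> u"
    unfolding minus_blinfun.rep_eq by (intro tendsto_intros pseudomonotone_demicontinuous[OF pm]) simp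
  ultimately show "blinfun_apply (A u - g) (z - u) + \<phi> z - \<phi> u \<ge> 0"
    by (intro LIMSEQ_le_const) auto
qed

section \<open>A finite alternative for concave functions\<close>

text \<open>Real-valued functions on an index type form a real vector space, on which Hahn--Banach
  produces the weights of the alternative.\<close>

instantiation "fun" :: (type, real_vector) real_vector
begin
definition scaleR_fun :: "real \<Rightarrow> ('a \<Rightarrow> 'b) \<Rightarrow> 'a \<Rightarrow> 'b" where
  "scaleR_fun r f = (\<lambda>x. r *\<^sub>R f x)"
instance by standard (auto simp: scaleR_fun_def plus_fun_def fun_eq_iff scaleR_add_right scaleR_add_left)
end

lemma sum_scaleR_indicators:
  "finite I \<Longrightarrow> (\<Sum>i\<in>I. c i *\<^sub>R (\<lambda>j. if j = i then 1 else 0)) = (\<lambda>j. if j \<in> I then c j else (0::real))"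
proof (induction I rule: finite_induct)
  case empty
  then show ?case by (simp add: zero_fun_def)
next
  case (insert a F)
  then show ?case by (auto simp: plus_fun_def scaleR_fun_def fun_eq_iff)
qed

definition alternative_gauge :: "'i set \<Rightarrow> ('i \<Rightarrow> 'x \<Rightarrow> real) \<Rightarrow> 'x set \<Rightarrow> ('i \<Rightarrow> real) \<Rightarrow> real" where
  "alternative_gauge I h X y = (INF (t, x) \<in> {0<..} \<times> X. Max ((\<lambda>i. y i - t * h i x) ` I))"

context
  fixes I :: "'i set" and h :: "'i \<Rightarrow> 'x::real_vector \<Rightarrow> real" and X :: "'x set"
  assumes I: "finite I" "I \<noteq> {}" and X: "convex X" "X \<noteq> {}"
    and concave: "\<And>i x y t. i \<in> I \<Longrightarrow> x \<in> X \<Longrightarrow> y \<in> X \<Longrightarrow> 0 \<le> t \<Longrightarrow> t \<le> 1 \<Longrightarrow>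
       (1 - t) * h i x + t * h i y \<le> h i ((1 - t) *\<^sub>R x + t *\<^sub>R y)"
    and negative: "\<And>x. x \<in> X \<Longrightarrow> \<exists>i\<in>I. h i x < 0"
begin

private abbreviation mx where "mx y t x \<equiv> Max ((\<lambda>i. y i - t * h i x) ` I)"
private abbreviation gauge where "gauge \<equiv> alternative_gauge I h X"

private lemma mx_ge: "i \<in> I \<Longrightarrow> y i - t * h i x \<le> mx y t x"
  using I by (intro Max_ge) auto

private lemma mx_le: "(\<And>i. i \<in> I \<Longrightarrow> y i - t * h i x \<le> b) \<Longrightarrow> mx y t x \<le> b"
  using I by (intro Max.boundedI) auto

private lemma Min_le_mx:
  assumes "t > 0" "x \<in> X"
  shows "Min (y ` I) \<le> mx y t x"
proof -
  obtain i where i: "i \<in> I" "h i x < 0" using negative[OF assms(2)] by blast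
  have "Min (y ` I) \<le> y i" using I i by (intro Min_le) auto
  also have "\<dots> \<le> y i - t * h i x" using mult_pos_neg[OF assms(1) i(2)] by simp
  also have "\<dots> \<le> mx y t x" by (rule mx_ge[OF i(1)])
  finally show ?thesis .
qed

lemma alternative_gauge_le_Max_at:
  "t > 0 \<Longrightarrow> x \<in> X \<Longrightarrow> gauge y \<le> Max ((\<lambda>i. y i - t * h i x) ` I)"
  unfolding alternative_gauge_def
  by (rule cINF_lower2[where x="(t, x)"]) (use Min_le_mx in \<open>auto intro!: bdd_belowI2\<close>)

private lemma q_greatest: "(\<And>t x. t > 0 \<Longrightarrow> x \<in> X \<Longrightarrow> b \<le> mx y t x) \<Longrightarrow> b \<le> gauge y"
  unfolding alternative_gauge_def using X(2) by (intro cINF_greatest) auto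

lemma Min_le_alternative_gauge: "Min (y ` I) \<le> gauge y"
  using Min_le_mx by (intro q_greatest)

lemma alternative_gauge_le_Max: "gauge y \<le> Max (y ` I)"
proof (rule field_le_epsilon)
  fix e :: real assume e: "e > 0"
  obtain x0 where x0: "x0 \<in> X" using X(2) by blast
  define B where "B = Max ((\<lambda>i. \<bar>h i x0\<bar>) ` I)"
  have B: "\<bar>h i x0\<bar> \<le> B" if "i \<in> I" for i unfolding B_def using I that by (intro Max_ge) auto
  then have "B \<ge> 0" using I(2) by (meson abs_ge_zero ex_in_conv order_trans)
  define t where "t = e / (B + 1)"
  have t: "t > 0" "t * B \<le> e" using e \<open>B \<ge> 0\<close> by (auto simp: t_def field_simps)
  have "gauge y \<le> mx y t x0" by (rule alternative_gauge_le_Max_at[OF t(1) x0])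
  also have "\<dots> \<le> Max (y ` I) + e"
  proof (rule mx_le)
    fix i assume i: "i \<in> I"
    have "y i \<le> Max (y ` I)" using I i by (intro Max_ge) auto
    moreover have "- (t * h i x0) \<le> t * B"
      using mult_left_mono[of "- h i x0" B t] B[OF i] t(1) by (simp add: abs_le_iff)
    ultimately show "y i - t * h i x0 \<le> Max (y ` I) + e" using t(2) by linarith
  qed
  finally show "gauge y \<le> Max (y ` I) + e" .
qed

lemma sublinear_alternative_gauge: "sublinear gauge"
proof (rule sublinearI)
  fix y y' :: "'i \<Rightarrow> real"
  have "gauge (y + y') \<le> mx y t x + mx y' t' x'" if tx: "t > 0" "x \<in> X" "t' > 0" "x' \<in> X" for t x t' x'
  proof -
    define s where "s = t' / (t + t')"
    have s: "0 \<le> s" "s \<le> 1" "(t + t') * (1 - s) = t" "(t + t') * s = t'"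
      using tx by (auto simp: s_def field_simps)
    define x'' where "x'' = (1 - s) *\<^sub>R x + s *\<^sub>R x'"
    have x'': "x'' \<in> X" unfolding x''_def using convexD[OF X(1) tx(2,4), of "1 - s" s] s by simp
    have "gauge (y + y') \<le> mx (y + y') (t + t') x''" using tx x'' by (intro alternative_gauge_le_Max_at) auto
    also have "\<dots> \<le> mx y t x + mx y' t' x'"
    proof (rule mx_le)
      fix i assume i: "i \<in> I"
      have "(t + t') * ((1 - s) * h i x + s * h i x') \<le> (t + t') * h i x''"
        unfolding x''_def using concave[OF i tx(2,4) s(1,2)] tx by (intro mult_left_mono) auto
      also have "(t + t') * ((1 - s) * h i x + s * h i x') = t * h i x + t' * h i x'"
        by (simp add: distrib_left mult.assoc[symmetric] s(3,4))
      finally show "(y + y') i - (t + t') * h i x'' \<le> mx y t x + mx y' t' x'"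
        using mx_ge[OF i, of y t x] mx_ge[OF i, of y' t' x'] by (simp add: algebra_simps)
    qed
    finally show ?thesis .
  qed
  then show "gauge (y + y') \<le> gauge y + gauge y'"
    unfolding alternative_gauge_def[of I h X y] alternative_gauge_def[of I h X y'] using X(2)
    by (intro le_INF_add_INF) auto
next
  fix s :: real and y :: "'i \<Rightarrow> real" assume s: "s > 0"
  have "gauge (s *\<^sub>R y) / s \<le> gauge y"
  proof (rule q_greatest)
    fix t :: real and x assume tx: "t > 0" "x \<in> X"
    have "gauge (s *\<^sub>R y) \<le> mx (s *\<^sub>R y) (s * t) x" using s tx by (intro alternative_gauge_le_Max_at) auto
    also have "\<dots> = Max ((*) s ` ((\<lambda>i. y i - t * h i x) ` I))"
      by (simp add: image_image scaleR_fun_def algebra_simps)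
    also have "\<dots> = s * mx y t x"
      using I s by (intro mono_Max_commute[symmetric]) (auto simp: mono_def)
    finally show "gauge (s *\<^sub>R y) / s \<le> mx y t x" using s by (simp add: field_simps)
  qed
  then show "gauge (s *\<^sub>R y) \<le> s * gauge y" using s by (simp add: field_simps)
next
  show "gauge 0 = 0"
    using Min_le_alternative_gauge[of 0] alternative_gauge_le_Max[of 0] I by (simp add: zero_fun_def)
qed

end

text \<open>The weights are the values on the unit vectors of a linear functional that equals \<open>1\<close> on
  the constant vector and is dominated by the gauge: domination by \<open>Max\<close> makes them
  nonnegative, and at the vector \<open>(h i x)\<^sub>i\<close> the gauge is at most \<open>0\<close>.\<close>

theorem finite_concave_alternative:
  fixes h :: "'i \<Rightarrow> 'x::real_vector \<Rightarrow> real"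
  assumes I: "finite I" "I \<noteq> {}" and X: "convex X" "X \<noteq> {}"
    and concave: "\<And>i x y t. i \<in> I \<Longrightarrow> x \<in> X \<Longrightarrow> y \<in> X \<Longrightarrow> 0 \<le> t \<Longrightarrow> t \<le> 1 \<Longrightarrow>
       (1 - t) * h i x + t * h i y \<le> h i ((1 - t) *\<^sub>R x + t *\<^sub>R y)"
    and c: "c < 0" and below: "\<And>x. x \<in> X \<Longrightarrow> \<exists>i\<in>I. h i x \<le> c"
  shows "\<exists>\<mu>. (\<forall>i\<in>I. \<mu> i \<ge> 0) \<and> sum \<mu> I = 1 \<and> (\<forall>x\<in>X. (\<Sum>i\<in>I. \<mu> i * h i x) < 0)"
proof -
  define h' where "h' i x = h i x - c / 2" for i x
  have concave': "(1 - t) * h' i x + t * h' i y \<le> h' i ((1 - t) *\<^sub>R x + t *\<^sub>R y)"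
    if "i \<in> I" "x \<in> X" "y \<in> X" "0 \<le> t" "t \<le> 1" for i x y t
  proof -
    have "(1 - t) * h' i x + t * h' i y = (1 - t) * h i x + t * h i y - c / 2"
      by (simp add: h'_def field_simps)
    then show ?thesis using concave[OF that] unfolding h'_def by linarith
  qed
  have negative: "\<exists>i\<in>I. h' i x < 0" if "x \<in> X" for x
    using below[OF that] c unfolding h'_def by force
  let ?q = "alternative_gauge I h' X"
  define one :: "'i \<Rightarrow> real" where "one = (\<lambda>j. if j \<in> I then 1 else 0)"
  have "a * 1 \<le> ?q (a *\<^sub>R one)" for a
  proof -
    have "(a *\<^sub>R one) ` I = {a}" using I unfolding one_def by (auto simp: scaleR_fun_def)
    then show ?thesis using Min_le_alternative_gauge[OF I X concave' negative, of "a *\<^sub>R one"] by simp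
  qed
  with hahn_banach_line[OF sublinear_alternative_gauge[OF I X concave' negative]]
  obtain F where F: "linear F" "F one = 1" "\<And>y. F y \<le> ?q y" by blast
  define \<mu> where "\<mu> i = F (\<lambda>j. if j = i then 1 else 0)" for i
  have F_sum: "F (\<lambda>j. if j \<in> I then y j else 0) = (\<Sum>i\<in>I. y i * \<mu> i)" for y
  proof -
    have "(\<lambda>j. if j \<in> I then y j else 0) = (\<Sum>i\<in>I. y i *\<^sub>R (\<lambda>j. if j = i then (1::real) else 0))"
      using I(1) by (rule sum_scaleR_indicators[symmetric])
    then show ?thesis unfolding \<mu>_def by (simp add: linear_sum[OF F(1)] linear_scale[OF F(1)])
  qed
  have "\<mu> i \<ge> 0" if "i \<in> I" for i
  proof -
    have "F (- (\<lambda>j. if j = i then 1 else 0)) \<le> Max ((- (\<lambda>j. if j = i then 1 else 0)) ` I)"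
      using F(3) alternative_gauge_le_Max[OF I X concave' negative] by (rule order_trans)
    also have "\<dots> \<le> 0" using I by (intro Max.boundedI) (auto split: if_splits)
    finally show ?thesis unfolding \<mu>_def using linear_neg[OF F(1)] by simp
  qed
  moreover have "sum \<mu> I = 1" using F_sum[of "\<lambda>_. 1"] F(2) unfolding one_def by simp
  moreover have "(\<Sum>i\<in>I. \<mu> i * h i x) < 0" if x: "x \<in> X" for x
  proof -
    have "F (\<lambda>j. if j \<in> I then h' j x else 0) \<le> Max ((\<lambda>i. (if i \<in> I then h' i x else 0) - 1 * h' i x) ` I)"
      using F(3) alternative_gauge_le_Max_at[OF I X concave' negative zero_less_one x] by (rule order_trans)
    also have "(\<lambda>i. (if i \<in> I then h' i x else 0) - 1 * h' i x) ` I = {0}" using I(2) by auto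
    finally have "F (\<lambda>j. if j \<in> I then h' j x else 0) \<le> 0" by simp
    then have "(\<Sum>i\<in>I. h' i x * \<mu> i) \<le> 0" using I F_sum[of "\<lambda>j. h' j x"] by simp
    moreover have "(\<Sum>i\<in>I. h' i x * \<mu> i) = (\<Sum>i\<in>I. \<mu> i * h i x) - c / 2 * sum \<mu> I"
      unfolding h'_def by (simp add: algebra_simps sum_subtractf sum_distrib_left)
    ultimately show ?thesis using \<open>sum \<mu> I = 1\<close> c by simp
  qed
  ultimately show ?thesis by blast
qed

section \<open>Existence and uniqueness of solutions\<close>

lemma power2_norm_convex_combination_le:
  fixes a b :: "'a::real_normed_vector"
  assumes "0 \<le> t" "t \<le> 1"
  shows "(norm ((1 - t) *\<^sub>R a + t *\<^sub>R b))\<^sup>2 \<le> (1 - t) * (norm a)\<^sup>2 + t * (norm b)\<^sup>2"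
proof -
  have "norm ((1 - t) *\<^sub>R a + t *\<^sub>R b) \<le> (1 - t) * norm a + t * norm b"
    using norm_triangle_ineq[of "(1 - t) *\<^sub>R a" "t *\<^sub>R b"] assms by simp
  then have "(norm ((1 - t) *\<^sub>R a + t *\<^sub>R b))\<^sup>2 \<le> ((1 - t) * norm a + t * norm b)\<^sup>2"
    by (intro power_mono) auto
  also have "\<dots> = (1 - t) * (norm a)\<^sup>2 + t * (norm b)\<^sup>2 - t * (1 - t) * (norm a - norm b)\<^sup>2"
    by (simp add: power2_eq_square algebra_simps)
  also have "\<dots> \<le> (1 - t) * (norm a)\<^sup>2 + t * (norm b)\<^sup>2" using assms by simp
  finally show ?thesis .
qed

lemma quadratic_inequality_bound:
  fixes m d P Q :: real
  assumes "m > 0" "P \<ge> 0" "d \<ge> 0" "m * d\<^sup>2 \<le> P * d + Q"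
  shows "d \<le> 1 + (P + \<bar>Q\<bar>) / m"
proof (cases "d \<le> 1")
  case True
  then show ?thesis using assms by (simp add: add_increasing2)
next
  case False
  then have "Q \<le> \<bar>Q\<bar> * d" using mult_left_mono[of 1 d "\<bar>Q\<bar>"] abs_ge_self[of Q] by simp
  with assms(4) have "(m * d) * d \<le> (P + \<bar>Q\<bar>) * d" by (simp add: power2_eq_square algebra_simps)
  then have "m * d \<le> P + \<bar>Q\<bar>" using False by simp
  then show ?thesis using assms(1) by (simp add: field_simps)
qed

lemma solves_VI_le:
  assumes "solves_VI A g \<phi> C u" "z \<in> C"
  shows "blinfun_apply (A u) (u - z) \<le> blinfun_apply g (u - z) + \<phi> z - \<phi> u"
proof -
  have "0 \<le> blinfun_apply (A u - g) (z - u) + \<phi> z - \<phi> u" using assms unfolding solves_VI_def by blast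
  moreover have "blinfun_apply (A u - g) (z - u) = blinfun_apply g (u - z) - blinfun_apply (A u) (u - z)"
    by (simp add: minus_blinfun.rep_eq blinfun.diff_right)
  ultimately show ?thesis by linarith
qed

lemma solves_VI_unique:
  assumes sm: "strongly_monotone m A" and m: "m > 0"
    and u: "solves_VI A g \<phi> C u" and v: "solves_VI A g \<phi> C v"
  shows "u = v"
proof -
  have "u \<in> C" "v \<in> C" using u v unfolding solves_VI_def by auto
  from solves_VI_le[OF u \<open>v \<in> C\<close>] solves_VI_le[OF v \<open>u \<in> C\<close>]
  have "blinfun_apply (A u - A v) (u - v) \<le> 0"
    by (simp add: minus_blinfun.rep_eq blinfun.diff_right)
  moreover have "m * (norm (u - v))\<^sup>2 \<le> blinfun_apply (A u - A v) (u - v)"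
    using sm unfolding strongly_monotone_def by blast
  ultimately have "m * (norm (u - v))\<^sup>2 \<le> 0" by linarith
  with m show ?thesis by (simp add: mult_le_0_iff)
qed

text \<open>It is concave in \<open>u\<close>, and the extra term is exactly what makes its average over a finite set
  of test points nonnegative at their barycentre.\<close>

definition vi_gap :: "('a::real_normed_vector \<Rightarrow> ('a \<Rightarrow>\<^sub>L real)) \<Rightarrow> ('a \<Rightarrow>\<^sub>L real)
    \<Rightarrow> ('a \<Rightarrow> real) \<Rightarrow> real \<Rightarrow> 'a \<Rightarrow> 'a \<Rightarrow> real" where
  "vi_gap A g \<phi> m z u = blinfun_apply (A z - g) (z - u) + \<phi> z - \<phi> u - m * (norm (z - u))\<^sup>2"

lemma solves_VI_imp_vi_gap_nonneg:
  assumes sm: "strongly_monotone m A" and u: "solves_VI A g \<phi> C u" and z: "z \<in> C"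
  shows "0 \<le> vi_gap A g \<phi> m z u"
proof -
  have "m * (norm (z - u))\<^sup>2 \<le> blinfun_apply (A z - A u) (z - u)"
    using sm unfolding strongly_monotone_def by blast
  moreover have "0 \<le> blinfun_apply (A u - g) (z - u) + \<phi> z - \<phi> u" using u z unfolding solves_VI_def by blast
  moreover have "blinfun_apply (A z - g) (z - u) = blinfun_apply (A z - A u) (z - u) + blinfun_apply (A u - g) (z - u)"
    by (simp add: minus_blinfun.rep_eq)
  ultimately show ?thesis unfolding vi_gap_def by linarith
qed

lemma vi_gap_nonneg_bounded:
  assumes m: "m > 0" and b: "b \<ge> 0" "\<And>x. \<phi> 0 - b * norm x \<le> \<phi> x"
    and u: "0 \<le> vi_gap A g \<phi> m z0 u"
  shows "norm u \<le> norm z0 + 1 + (norm (A z0 - g) + b + \<bar>\<phi> z0 - \<phi> 0 + b * norm z0\<bar>) / m"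
proof -
  define d where "d = norm (z0 - u)"
  have "norm u \<le> norm z0 + d" unfolding d_def using norm_triangle_ineq[of z0 "u - z0"]
    by (simp add: norm_minus_commute)
  moreover have "m * d\<^sup>2 \<le> (norm (A z0 - g) + b) * d + (\<phi> z0 - \<phi> 0 + b * norm z0)"
  proof -
    have "blinfun_apply (A z0 - g) (z0 - u) \<le> norm (A z0 - g) * d"
      unfolding d_def using abs_blinfun_apply_le[of "A z0 - g" "z0 - u"] by linarith
    moreover have "b * norm u \<le> b * (norm z0 + d)" using \<open>norm u \<le> norm z0 + d\<close> b(1) by (rule mult_left_mono)
    ultimately show ?thesis using u b(2)[of u] unfolding vi_gap_def d_def by (simp add: algebra_simps)
  qed
  then have "d \<le> 1 + (norm (A z0 - g) + b + \<bar>\<phi> z0 - \<phi> 0 + b * norm z0\<bar>) / m"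
    using b(1) m by (intro quadratic_inequality_bound) (auto simp: d_def)
  ultimately show ?thesis by simp
qed

context
  fixes A :: "'a::banach \<Rightarrow> ('a \<Rightarrow>\<^sub>L real)" and m :: real and g :: "'a \<Rightarrow>\<^sub>L real"
    and \<phi> :: "'a \<Rightarrow> real"
  assumes pm: "pseudomonotone A" and m: "m > 0" and sm: "strongly_monotone m A"
    and convex: "convex_on UNIV \<phi>" and cont: "continuous_on UNIV \<phi>"
begin

private abbreviation gap where "gap \<equiv> vi_gap A g \<phi> m"

lemma vi_gap_concave:
  assumes "0 \<le> t" "t \<le> 1"
  shows "(1 - t) * gap z x + t * gap z y \<le> gap z ((1 - t) *\<^sub>R x + t *\<^sub>R y)"
proof -
  have zz: "z - ((1 - t) *\<^sub>R x + t *\<^sub>R y) = (1 - t) *\<^sub>R (z - x) + t *\<^sub>R (z - y)"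
    by (simp add: algebra_simps)
  have lin: "blinfun_apply (A z - g) (z - ((1 - t) *\<^sub>R x + t *\<^sub>R y)) =
     (1 - t) * blinfun_apply (A z - g) (z - x) + t * blinfun_apply (A z - g) (z - y)"
    unfolding zz by (simp add: blinfun.add_right blinfun.scaleR_right)
  have "\<phi> ((1 - t) *\<^sub>R x + t *\<^sub>R y) \<le> (1 - t) * \<phi> x + t * \<phi> y"
    using convex_onD[OF convex assms] by simp
  moreover have "m * (norm (z - ((1 - t) *\<^sub>R x + t *\<^sub>R y)))\<^sup>2
      \<le> m * ((1 - t) * (norm (z - x))\<^sup>2 + t * (norm (z - y))\<^sup>2)"
    unfolding zz using power2_norm_convex_combination_le[OF assms] m by (intro mult_left_mono) auto
  ultimately show ?thesis unfolding vi_gap_def lin by (simp add: algebra_simps)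
qed

lemma vi_gap_barycentre_nonneg:
  assumes Z: "finite Z" "Z \<noteq> {}" and \<mu>: "\<And>z. z \<in> Z \<Longrightarrow> \<mu> z \<ge> 0" "sum \<mu> Z = 1"
  shows "(\<Sum>z\<in>Z. \<mu> z * gap z (\<Sum>z\<in>Z. \<mu> z *\<^sub>R z)) \<ge> 0"
proof -
  define u where "u = (\<Sum>z\<in>Z. \<mu> z *\<^sub>R z)"
  have "(\<Sum>z\<in>Z. \<mu> z * blinfun_apply (A u - g) (z - u)) = blinfun_apply (A u - g) (\<Sum>z\<in>Z. \<mu> z *\<^sub>R (z - u))"
    by (simp add: blinfun.sum_right blinfun.scaleR_right)
  also have "(\<Sum>z\<in>Z. \<mu> z *\<^sub>R (z - u)) = 0"
    by (simp add: scaleR_diff_right sum_subtractf u_def \<mu>(2) flip: scaleR_sum_left)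
  finally have centred: "(\<Sum>z\<in>Z. \<mu> z * blinfun_apply (A u - g) (z - u)) = 0" by simp
  have jensen: "\<phi> u \<le> (\<Sum>z\<in>Z. \<mu> z * \<phi> z)"
    unfolding u_def by (rule convex_on_sum[OF Z convex \<mu>(2)]) (use \<mu> in auto)
  have "\<mu> z * (m * (norm (z - u))\<^sup>2) + \<mu> z * blinfun_apply (A u - g) (z - u)
      \<le> \<mu> z * blinfun_apply (A z - g) (z - u)" if "z \<in> Z" for z
  proof -
    have "m * (norm (z - u))\<^sup>2 + blinfun_apply (A u - g) (z - u) \<le> blinfun_apply (A z - g) (z - u)"
      using sm unfolding strongly_monotone_def by (simp add: minus_blinfun.rep_eq algebra_simps)
    from mult_left_mono[OF this \<mu>(1)[OF that]] show ?thesis by (simp add: distrib_left)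
  qed
  then have "(\<Sum>z\<in>Z. \<mu> z * (m * (norm (z - u))\<^sup>2) + \<mu> z * blinfun_apply (A u - g) (z - u))
      \<le> (\<Sum>z\<in>Z. \<mu> z * blinfun_apply (A z - g) (z - u))"
    by (rule sum_mono)
  then have "(\<Sum>z\<in>Z. \<mu> z * (m * (norm (z - u))\<^sup>2)) \<le> (\<Sum>z\<in>Z. \<mu> z * blinfun_apply (A z - g) (z - u))"
    by (simp add: sum.distrib centred)
  with jensen \<mu>(2) show ?thesis
    unfolding u_def[symmetric] vi_gap_def
    by (simp add: algebra_simps sum.distrib sum_subtractf sum_distrib_left flip: sum_distrib_right)
qed

lemma continuous_vi_gap: "continuous_on UNIV (gap z)"
  unfolding vi_gap_def by (intro continuous_intros cont)

text \<open>The finite-dimensional step, a Ky Fan type inequality: a convex combination of the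
  gaps that is negative on the convex hull would contradict nonnegativity at the barycentre.\<close>

lemma vi_gap_finite_solution:
  assumes Z: "finite Z" "Z \<noteq> {}"
  shows "\<exists>u\<in>convex hull Z. \<forall>z\<in>Z. gap z u \<ge> 0"
proof -
  have approx: "\<exists>x\<in>convex hull Z. \<forall>z\<in>Z. gap z x > c" if c: "c < 0" for c
  proof (rule ccontr)
    assume "\<not> ?thesis"
    then have below: "\<And>x. x \<in> convex hull Z \<Longrightarrow> \<exists>z\<in>Z. gap z x \<le> c" by (auto simp: not_less)
    have "\<exists>\<mu>. (\<forall>i\<in>Z. \<mu> i \<ge> 0) \<and> sum \<mu> Z = 1 \<and> (\<forall>x\<in>convex hull Z. (\<Sum>i\<in>Z. \<mu> i * gap i x) < 0)"
    proof (rule finite_concave_alternative[OF Z convex_convex_hull _ _ c below])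
      show "convex hull Z \<noteq> {}" using Z by simp
      show "(1 - t) * gap i x + t * gap i y \<le> gap i ((1 - t) *\<^sub>R x + t *\<^sub>R y)"
        if "0 \<le> t" "t \<le> 1" for i x y t
        using vi_gap_concave[OF that] .
    qed
    then obtain \<mu> where \<mu>: "\<And>i. i \<in> Z \<Longrightarrow> \<mu> i \<ge> 0" "sum \<mu> Z = 1"
      "\<And>x. x \<in> convex hull Z \<Longrightarrow> (\<Sum>i\<in>Z. \<mu> i * gap i x) < 0" by blast
    have "(\<Sum>z\<in>Z. \<mu> z *\<^sub>R z) \<in> convex hull Z"
      unfolding convex_hull_finite[OF Z(1)] using \<mu>(1,2) by blast
    from \<mu>(3)[OF this] vi_gap_barycentre_nonneg[OF Z \<mu>(1,2)] show False by simp
  qed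
  have "\<forall>k. \<exists>x\<in>convex hull Z. \<forall>z\<in>Z. gap z x > - 1 / (real k + 1)"
    using approx by simp
  then obtain x where x: "\<And>k. x k \<in> convex hull Z" "\<And>k z. z \<in> Z \<Longrightarrow> - 1 / (real k + 1) < gap z (x k)"
    by metis
  have "seq_compact (convex hull Z)"
    using Z(1) by (intro compact_imp_seq_compact finite_imp_compact_convex_hull)
  from seq_compactE[OF this] x(1) obtain l r where
    lr: "l \<in> convex hull Z" "strict_mono r" "(x \<circ> r) \<longlonglongrightarrow> l" by blast
  have "gap z l \<ge> 0" if "z \<in> Z" for z
  proof (rule LIMSEQ_le)
    have "(\<lambda>k. 1 / (real k + 1)) \<longlonglongrightarrow> 0"
      using LIMSEQ_inverse_real_of_nat by (simp add: inverse_eq_divide add.commute)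
    from tendsto_minus[OF LIMSEQ_subseq_LIMSEQ[OF this lr(2)]]
    show "(\<lambda>k. - 1 / (real (r k) + 1)) \<longlonglongrightarrow> 0" by (simp add: o_def)
    show "(\<lambda>k. gap z ((x \<circ> r) k)) \<longlonglongrightarrow> gap z l"
      using continuous_on_tendsto_compose[OF continuous_vi_gap lr(3)] by simp
    show "\<exists>N. \<forall>k\<ge>N. - 1 / (real (r k) + 1) \<le> gap z ((x \<circ> r) k)"
      using x(2)[OF that] by (auto intro: less_imp_le)
  qed
  then show ?thesis using lr(1) by blast
qed

text \<open>Existence: the sets \<open>{u \<in> C. gap z u \<ge> 0}\<close>, \<open>z \<in> C\<close>, cut down to a ball that contains
  all of them for a fixed \<open>z0\<close>, are closed, convex and bounded and have the finite intersection
  property; a point in their intersection satisfies Minty's inequality.\<close>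

theorem solves_VI_exists:
  assumes refl: "reflexive_space TYPE('a)" and C: "closed C" "convex C" "C \<noteq> {}"
    and b: "b \<ge> 0" "\<And>x. \<phi> 0 - b * norm x \<le> \<phi> x"
  shows "\<exists>u. solves_VI A g \<phi> C u"
proof -
  obtain z0 where z0: "z0 \<in> C" using C(3) by blast
  define R where "R = norm z0 + 1 + (norm (A z0 - g) + b + \<bar>\<phi> z0 - \<phi> 0 + b * norm z0\<bar>) / m"
  define K where "K z = C \<inter> cball 0 R \<inter> {u. 0 \<le> gap z u}" for z
  have "closed (K z) \<and> convex (K z) \<and> K z \<subseteq> cball 0 R" for z
  proof -
    have "closed {u. 0 \<le> gap z u}" using continuous_vi_gap by (intro closed_Collect_le) auto
    moreover have "convex {u. 0 \<le> gap z u}"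
    proof (rule convexI)
      fix x y and u v :: real
      assume "x \<in> {u. 0 \<le> gap z u}" "y \<in> {u. 0 \<le> gap z u}" "0 \<le> u" "0 \<le> v" "u + v = 1"
      moreover from this have "u = 1 - v" by simp
      ultimately have "0 \<le> (1 - v) * gap z x + v * gap z y" "0 \<le> v" "v \<le> 1" by simp_all
      then show "u *\<^sub>R x + v *\<^sub>R y \<in> {u. 0 \<le> gap z u}"
        using vi_gap_concave[of v z x y] \<open>u = 1 - v\<close> by simp
    qed
    ultimately show ?thesis unfolding K_def using C(1,2) by (auto intro!: closed_Int convex_Int)
  qed
  then have K: "\<And>K'. K' \<in> K ` C \<Longrightarrow> closed K' \<and> convex K' \<and> K' \<subseteq> cball 0 R" by blast
  have "\<Inter>\<F> \<noteq> {}" if \<F>: "finite \<F>" "\<F> \<subseteq> K ` C" for \<F>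
  proof -
    obtain Z' where Z': "Z' \<subseteq> C" "finite Z'" "\<F> = K ` Z'" using finite_subset_image[OF \<F>] by blast
    have Z: "finite (insert z0 Z')" "insert z0 Z' \<noteq> {}" using Z' by auto
    from vi_gap_finite_solution[OF Z] obtain u where
      u: "u \<in> convex hull (insert z0 Z')" "\<And>z. z \<in> insert z0 Z' \<Longrightarrow> 0 \<le> gap z u" by blast
    have "u \<in> C" using u(1) hull_minimal[of "insert z0 Z'" C convex] Z'(1) z0 C(2) by blast
    moreover have "norm u \<le> R" unfolding R_def using vi_gap_nonneg_bounded[OF m b u(2)] by blast
    ultimately have "u \<in> K z" if "z \<in> Z'" for z using u(2) that unfolding K_def by auto
    then show ?thesis using Z'(3) by blast
  qed
  from reflexive_Inter_closed_convex_nonempty[OF refl K this]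
  obtain u where u: "\<And>z. z \<in> C \<Longrightarrow> u \<in> K z" by blast
  have "u \<in> C" using u[OF z0] unfolding K_def by blast
  moreover have "0 \<le> blinfun_apply (A z - g) (z - u) + \<phi> z - \<phi> u" if "z \<in> C" for z
  proof -
    have "0 \<le> gap z u" using u[OF that] unfolding K_def by blast
    moreover have "0 \<le> m * (norm (z - u))\<^sup>2" using m by simp
    ultimately show ?thesis unfolding vi_gap_def by linarith
  qed
  ultimately show ?thesis using solves_VI_if_minty[OF pm C(2) _ convex] by blast
qed

end

section \<open>Stability under Mosco convergence\<close>

lemma tendsto_if_subseq_subseq:
  fixes x :: "nat \<Rightarrow> 'a::metric_space"
  assumes "\<And>r::nat\<Rightarrow>nat. strict_mono r \<Longrightarrow> \<exists>r'::nat\<Rightarrow>nat. strict_mono r' \<and> (x \<circ> r \<circ> r') \<longlonglongrightarrow> l"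
  shows "x \<longlonglongrightarrow> l"
proof (rule ccontr)
  assume "\<not> x \<longlonglongrightarrow> l"
  then obtain e where e: "e > 0" "\<not> eventually (\<lambda>n. dist (x n) l < e) sequentially"
    unfolding tendsto_iff by blast
  from not_eventually_imp_subseq[OF e(2)] obtain r :: "nat \<Rightarrow> nat"
    where r: "strict_mono r" "\<And>k. \<not> dist (x (r k)) l < e" by blast
  from assms[OF r(1)] obtain r' where "(x \<circ> r \<circ> r') \<longlonglongrightarrow> l" by blast
  from tendstoD[OF this e(1)] obtain k where "dist ((x \<circ> r \<circ> r') k) l < e"
    by (auto dest: eventually_happens)
  then show False using r(2)[of "r' k"] by simp
qed

lemma tendsto_blinfun_apply_weakly_conv:
  fixes f :: "nat \<Rightarrow> 'a::real_normed_vector \<Rightarrow>\<^sub>L real"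
  assumes f: "f \<longlonglongrightarrow> g" and x: "weakly_conv x w" "\<And>n. norm (x n) \<le> R"
  shows "(\<lambda>n. blinfun_apply (f n) (x n)) \<longlonglongrightarrow> blinfun_apply g w"
proof -
  have "(\<lambda>n. blinfun_apply (f n - g) (x n)) \<longlonglongrightarrow> 0"
  proof (rule Lim_null_comparison)
    have "norm (blinfun_apply (f n - g) (x n)) \<le> norm (f n - g) * R" for n
      using norm_blinfun[of "f n - g" "x n"] mult_left_mono[OF x(2)[of n] norm_ge_zero[of "f n - g"]]
      by linarith
    then show "eventually (\<lambda>n. norm (blinfun_apply (f n - g) (x n)) \<le> norm (f n - g) * R) sequentially"
      by simp
    show "(\<lambda>n. norm (f n - g) * R) \<longlonglongrightarrow> 0"
      using tendsto_mult_left_zero[OF tendsto_norm_zero[OF LIM_zero[OF f]]] .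
  qed
  moreover have "(\<lambda>n. blinfun_apply g (x n)) \<longlonglongrightarrow> blinfun_apply g w"
    using x(1) unfolding weakly_conv_def by blast
  ultimately have "(\<lambda>n. blinfun_apply (f n - g) (x n) + blinfun_apply g (x n)) \<longlonglongrightarrow> 0 + blinfun_apply g w"
    by (rule tendsto_add)
  then show ?thesis by (simp add: minus_blinfun.rep_eq)
qed

context
  fixes A :: "'a::banach \<Rightarrow> ('a \<Rightarrow>\<^sub>L real)" and m b :: real and \<phi> :: "'a \<Rightarrow> real"
    and E :: "'a set" and En :: "nat \<Rightarrow> 'a set" and g :: "'a \<Rightarrow>\<^sub>L real" and gn :: "nat \<Rightarrow> 'a \<Rightarrow>\<^sub>L real"
    and un :: "nat \<Rightarrow> 'a" and u :: 'a
  assumes pm: "pseudomonotone A" and m: "m > 0" and sm: "strongly_monotone m A"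
    and convex: "convex_on UNIV \<phi>" and cont: "continuous_on UNIV \<phi>"
    and b: "b \<ge> 0" "\<And>x. \<phi> 0 - b * norm x \<le> \<phi> x"
    and mosco: "mosco_conv En E" and gn: "gn \<longlonglongrightarrow> g"
    and un: "\<And>n. solves_VI A (gn n) \<phi> (En n) (un n)" and u: "solves_VI A g \<phi> E u"
begin

lemma mosco_recovery_seq: "v \<in> E \<Longrightarrow> \<exists>vs. (\<forall>n. vs n \<in> En n) \<and> vs \<longlonglongrightarrow> v"
  using mosco unfolding mosco_conv_def by blast

text \<open>Boundedness of the solutions: compare \<open>un n\<close> with a recovery sequence of \<open>u\<close> through
  the coercivity estimate for the gap.\<close>

lemma mosco_solutions_bounded: "\<exists>R. \<forall>n. norm (un n) \<le> R"
proof -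
  obtain zs where zs: "\<And>n. zs n \<in> En n" "zs \<longlonglongrightarrow> u"
    using mosco_recovery_seq u unfolding solves_VI_def by blast
  have "Bseq zs" "Bseq gn" "Bseq (\<lambda>n. \<phi> (zs n))"
    using convergentI[OF zs(2)] convergentI[OF gn] convergentI[OF continuous_on_tendsto_compose[OF cont zs(2)]]
    by (simp_all add: convergent_imp_Bseq)
  then obtain Z G P where Z: "\<And>n. norm (zs n) \<le> Z" and G: "\<And>n. norm (gn n) \<le> G"
    and P: "\<And>n. norm (\<phi> (zs n)) \<le> P"
    unfolding Bseq_def by blast
  obtain K where K: "\<And>n. norm (A (zs n)) \<le> K" using pseudomonotone_bounded_seq[of A zs Z] pm Z by blast
  have "norm (un n) \<le> Z + 1 + (K + G + b + (P + \<bar>\<phi> 0\<bar> + b * Z)) / m" for n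
  proof -
    have "0 \<le> vi_gap A (gn n) \<phi> m (zs n) (un n)" by (rule solves_VI_imp_vi_gap_nonneg[OF sm un zs(1)])
    from vi_gap_nonneg_bounded[OF m b this]
    have "norm (un n) \<le> norm (zs n) + 1 + (norm (A (zs n) - gn n) + b
        + \<bar>\<phi> (zs n) - \<phi> 0 + b * norm (zs n)\<bar>) / m" .
    also have "\<dots> \<le> Z + 1 + (K + G + b + (P + \<bar>\<phi> 0\<bar> + b * Z)) / m"
    proof -
      have "norm (A (zs n) - gn n) \<le> K + G"
        using norm_triangle_ineq4[of "A (zs n)" "gn n"] K[of n] G[of n] by linarith
      moreover have "\<bar>\<phi> (zs n) - \<phi> 0 + b * norm (zs n)\<bar> \<le> P + \<bar>\<phi> 0\<bar> + b * Z"
      proof -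
        have "\<bar>\<phi> (zs n)\<bar> \<le> P" using P[of n] by simp
        moreover have "0 \<le> b * norm (zs n)" "b * norm (zs n) \<le> b * Z"
          using b(1) Z[of n] by (simp_all add: mult_left_mono)
        ultimately show ?thesis by arith
      qed
      ultimately show ?thesis using Z[of n] m by (intro add_mono divide_right_mono) auto
    qed
    finally show ?thesis .
  qed
  then show ?thesis by blast
qed

context
  fixes s :: "nat \<Rightarrow> nat" and w :: 'a and R K :: real
  assumes s: "strict_mono s" and w: "weakly_conv (un \<circ> s) w"
    and R: "\<And>n. norm (un n) \<le> R" and K: "\<And>n. norm (A (un n)) \<le> K"
begin

text \<open>The key estimate along a weakly convergent subsequence; tested with a recovery sequence
  of \<open>w\<close> itself it gives the limsup condition in the definition of pseudomonotonicity.\<close>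

lemma mosco_limsup_estimate:
  assumes vs: "\<And>n. vs n \<in> En n" "vs \<longlonglongrightarrow> v" and e: "e > 0"
  shows "eventually (\<lambda>k. blinfun_apply (A (un (s k))) (un (s k) - v)
    < blinfun_apply g (w - v) + \<phi> v - \<phi> w + e) sequentially"
proof -
  have e4: "e / 4 > 0" using e by simp
  have vss: "(\<lambda>k. vs (s k)) \<longlonglongrightarrow> v" using LIMSEQ_subseq_LIMSEQ[OF vs(2) s] by (simp add: o_def)
  have "(\<lambda>k. vs (s k) - v) \<longlonglongrightarrow> 0" using vss by (rule LIM_zero)
  then have "(\<lambda>k. blinfun_apply (A (un (s k))) (vs (s k) - v)) \<longlonglongrightarrow> 0"
    using K by (intro bounded_apply_tendsto_zero) auto
  from order_tendstoD(2)[OF this e4]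
  have T1: "eventually (\<lambda>k. blinfun_apply (A (un (s k))) (vs (s k) - v) < e / 4) sequentially" .
  have "norm ((un \<circ> s) n) \<le> R" for n using R by simp
  from tendsto_blinfun_apply_weakly_conv[OF LIMSEQ_subseq_LIMSEQ[OF gn s] w this]
  have "(\<lambda>k. blinfun_apply (gn (s k)) (un (s k))) \<longlonglongrightarrow> blinfun_apply g w" by (simp add: o_def)
  moreover have "(\<lambda>k. blinfun_apply (gn (s k)) (vs (s k))) \<longlonglongrightarrow> blinfun_apply g v"
    using LIMSEQ_subseq_LIMSEQ[OF gn s] vss by (intro blinfun.tendsto) (simp_all add: o_def)
  ultimately have "(\<lambda>k. blinfun_apply (gn (s k)) (un (s k) - vs (s k))) \<longlonglongrightarrow> blinfun_apply g (w - v)"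
    by (simp add: blinfun.diff_right tendsto_diff)
  from order_tendstoD(2)[OF this, of "blinfun_apply g (w - v) + e / 4"] e4
  have T2: "eventually (\<lambda>k. blinfun_apply (gn (s k)) (un (s k) - vs (s k)) < blinfun_apply g (w - v) + e / 4)
      sequentially" by simp
  from order_tendstoD(2)[OF continuous_on_tendsto_compose[OF cont vss], of "\<phi> v + e / 4"] e4
  have T3: "eventually (\<lambda>k. \<phi> (vs (s k)) < \<phi> v + e / 4) sequentially" by simp
  have T4: "eventually (\<lambda>k. \<phi> w - e / 4 < \<phi> (un (s k))) sequentially"
    using convex_continuous_weakly_lsc[OF convex cont w e4] by simp
  from T1 T2 T3 T4 show ?thesis
  proof eventually_elim
    case (elim k)
    have "blinfun_apply (A (un (s k))) (un (s k) - vs (s k))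
        \<le> blinfun_apply (gn (s k)) (un (s k) - vs (s k)) + \<phi> (vs (s k)) - \<phi> (un (s k))"
      by (rule solves_VI_le[OF un vs(1)])
    moreover have "blinfun_apply (A (un (s k))) (un (s k) - v)
        = blinfun_apply (A (un (s k))) (un (s k) - vs (s k)) + blinfun_apply (A (un (s k))) (vs (s k) - v)"
      by (simp add: blinfun.diff_right)
    ultimately show ?case using elim by linarith
  qed
qed

lemma mosco_weak_limit_solves: "solves_VI A g \<phi> E w"
  unfolding solves_VI_def
proof (intro conjI ballI)
  have closed_under_weak_limits: "\<And>nk z zl. filterlim nk at_top sequentially \<Longrightarrow> (\<And>k. z k \<in> En (nk k))
      \<Longrightarrow> weakly_conv z zl \<Longrightarrow> zl \<in> E"
    using mosco unfolding mosco_conv_def by blast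
  show "w \<in> E"
    by (rule closed_under_weak_limits[OF filterlim_subseq[OF s] _ w]) (use un in \<open>simp add: solves_VI_def\<close>)
  then obtain ws where ws: "\<And>n. ws n \<in> En n" "ws \<longlonglongrightarrow> w" using mosco_recovery_seq by blast
  fix v assume "v \<in> E"
  then obtain vs where vs: "\<And>n. vs n \<in> En n" "vs \<longlonglongrightarrow> v" using mosco_recovery_seq by blast
  have "blinfun_apply (A w) (w - v) \<le> blinfun_apply g (w - v) + \<phi> v - \<phi> w + e" if e: "e > 0" for e
  proof -
    have e2: "e / 2 > 0" using e by simp
    have "eventually (\<lambda>k. blinfun_apply (A w) (w - v) - e / 2 < blinfun_apply (A (un (s k))) (un (s k) - v)) sequentially"
    proof (rule pseudomonotoneD[OF pm w _ e2, unfolded o_def])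
      show "eventually (\<lambda>k. blinfun_apply (A (un (s k))) (un (s k) - w) < e') sequentially" if "e' > 0" for e'
        using mosco_limsup_estimate[OF ws that] by simp
    qed
    with mosco_limsup_estimate[OF vs e2]
    have "eventually (\<lambda>k. blinfun_apply (A w) (w - v) - e / 2 < blinfun_apply g (w - v) + \<phi> v - \<phi> w + e / 2)
        sequentially"
      by eventually_elim linarith
    then show ?thesis by (auto dest: eventually_happens)
  qed
  then have "blinfun_apply (A w) (w - v) \<le> blinfun_apply g (w - v) + \<phi> v - \<phi> w"
    by (rule field_le_epsilon)
  moreover have "blinfun_apply (A w - g) (v - w) = blinfun_apply g (w - v) - blinfun_apply (A w) (w - v)"
    by (simp add: minus_blinfun.rep_eq blinfun.diff_right)
  ultimately show "0 \<le> blinfun_apply (A w - g) (v - w) + \<phi> v - \<phi> w" by linarith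
qed

text \<open>Strong convergence: strong monotonicity bounds \<open>m * norm (un (s k) - u)\<^sup>2\<close> by the
  limsup estimate at \<open>u = w\<close> plus a term that vanishes by weak convergence.\<close>

lemma mosco_subseq_tendsto: "(un \<circ> s) \<longlonglongrightarrow> u"
proof -
  have wu: "w = u" using solves_VI_unique[OF sm m mosco_weak_limit_solves u] .
  obtain zs where zs: "\<And>n. zs n \<in> En n" "zs \<longlonglongrightarrow> u"
    using mosco_recovery_seq u unfolding solves_VI_def by blast
  show ?thesis
  proof (rule tendstoI)
    fix \<epsilon> :: real assume \<epsilon>: "\<epsilon> > 0"
    define e where "e = m * \<epsilon>\<^sup>2 / 4"
    have e: "e > 0" unfolding e_def using m \<epsilon> by simp
    have ev1: "eventually (\<lambda>k. blinfun_apply (A (un (s k))) (un (s k) - u) < e) sequentially"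
      using mosco_limsup_estimate[OF zs e] wu by simp
    have "(\<lambda>k. blinfun_apply (A u) (un (s k))) \<longlonglongrightarrow> blinfun_apply (A u) u"
      using w wu unfolding weakly_conv_def by (auto simp: o_def)
    then have "(\<lambda>k. blinfun_apply (A u) (un (s k) - u)) \<longlonglongrightarrow> 0"
      using LIM_zero by (simp add: blinfun.diff_right)
    from tendstoD[OF this e]
    have ev2: "eventually (\<lambda>k. \<bar>blinfun_apply (A u) (un (s k) - u)\<bar> < e) sequentially" by simp
    from ev1 ev2 show "eventually (\<lambda>k. dist ((un \<circ> s) k) u < \<epsilon>) sequentially"
    proof eventually_elim
      case (elim k)
      have "m * (norm (un (s k) - u))\<^sup>2 \<le> blinfun_apply (A (un (s k)) - A u) (un (s k) - u)"
        using sm unfolding strongly_monotone_def by blast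
      also have "\<dots> < m * (\<epsilon>\<^sup>2 / 2)"
        using elim by (simp add: minus_blinfun.rep_eq abs_less_iff e_def)
      finally have "(norm (un (s k) - u))\<^sup>2 * 2 < \<epsilon>\<^sup>2" using m by simp
      then have "(norm (un (s k) - u))\<^sup>2 < \<epsilon>\<^sup>2" using zero_le_power2[of "norm (un (s k) - u)"] by linarith
      then show ?case using \<epsilon> by (simp add: dist_norm power_less_imp_less_base)
    qed
  qed
qed

end

theorem mosco_solutions_tendsto:
  assumes refl: "reflexive_space TYPE('a)"
  shows "un \<longlonglongrightarrow> u"
proof (rule tendsto_if_subseq_subseq)
  fix r :: "nat \<Rightarrow> nat" assume r: "strict_mono r"
  obtain R where R: "\<And>n. norm (un n) \<le> R" using mosco_solutions_bounded by blast
  obtain K where K: "\<And>n. norm (A (un n)) \<le> K" using pseudomonotone_bounded_seq[of A un R] pm R by blast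
  obtain r' w where r': "strict_mono r'" "weakly_conv (un \<circ> r \<circ> r') w"
    using reflexive_weakly_convergent_subseq[OF refl, of "un \<circ> r" R] R by auto
  have "(un \<circ> (r \<circ> r')) \<longlonglongrightarrow> u"
    using mosco_subseq_tendsto[OF strict_mono_o[OF r r'(1)] _ R K] r'(2) by (simp add: o_assoc)
  with r'(1) show "\<exists>r'. strict_mono r' \<and> (un \<circ> r \<circ> r') \<longlonglongrightarrow> u" by (auto simp: o_assoc)
qed

end

theorem proposition1:
  fixes A :: "'a::banach \<Rightarrow> ('a \<Rightarrow>\<^sub>L real)"
    and m :: real
    and E :: "'a set"
    and \<phi> :: "'a \<Rightarrow> real"
    and g :: "'a \<Rightarrow>\<^sub>L real"
    and En :: "nat \<Rightarrow> 'a set"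
    and gn :: "nat \<Rightarrow> ('a \<Rightarrow>\<^sub>L real)"
  assumes refl: "reflexive_space TYPE('a)"
    and pm: "pseudomonotone A"
    and m_pos: "m > 0"
    and sm: "strongly_monotone m A"
    and E: "E \<noteq> {}" "closed E" "convex E"
    and phi_convex: "convex_on UNIV \<phi>"
    and phi_lsc: "lower_semicont \<phi>"
    and En: "\<And>n. En n \<noteq> {}" "\<And>n. closed (En n)" "\<And>n. convex (En n)"
    and mosco: "mosco_conv En E"
    and gn: "gn \<longlonglongrightarrow> g"
  shows "(\<forall>n. \<exists>!v. solves_VI A (gn n) \<phi> (En n) v)
       \<and> (\<exists>!v. solves_VI A g \<phi> E v)
       \<and> (\<forall>un u. (\<forall>n. solves_VI A (gn n) \<phi> (En n) (un n)) \<and> solves_VI A g \<phi> E u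
                 \<longrightarrow> un \<longlonglongrightarrow> u)"
proof -
  have cont: "continuous_on UNIV \<phi>" by (rule convex_lsc_continuous[OF phi_convex phi_lsc])
  obtain b where b: "b \<ge> 0" "\<And>x. \<phi> 0 - b * norm x \<le> \<phi> x"
    using convex_lsc_linear_lower_bound[OF phi_convex phi_lsc] by blast
  have unique_solution: "\<exists>!v. solves_VI A h \<phi> C v" if C: "closed C" "convex C" "C \<noteq> {}" for C h
  proof -
    obtain v where v: "solves_VI A h \<phi> C v"
      using solves_VI_exists[OF pm m_pos sm phi_convex cont refl C b] by blast
    with solves_VI_unique[OF sm m_pos] show ?thesis by blast
  qed
  show ?thesis
  proof (intro conjI allI impI)
    show "\<exists>!v. solves_VI A (gn n) \<phi> (En n) v" for n by (rule unique_solution[OF En(2,3,1)])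
    show "\<exists>!v. solves_VI A g \<phi> E v" by (rule unique_solution[OF E(2,3,1)])
    show "un \<longlonglongrightarrow> u" if "(\<forall>n. solves_VI A (gn n) \<phi> (En n) (un n)) \<and> solves_VI A g \<phi> E u" for un u
      using mosco_solutions_tendsto[OF pm m_pos sm phi_convex cont b mosco gn _ _ refl] that by blast
  qed
qed

end
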